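(* Let $A,B\in\mathbb{M}_k$ be positive definite matrices and let $\Phi:\mathbb{M}_k\to\mathbb{M}_n$ be a unital positive linear map. Then $\mathrm{Tr}\big[\Phi((A+B)^p)^{-1/p}\big]\le\mathrm{Tr}\big[\Phi(A^p)^{-1/p}\big]+\mathrm{Tr}\big[\Phi(B^p)^{-1/p}\big]$ for all $p\in[-1,1]\setminus\{0\}$.
   Context: $\mathbb{M}_n$ denotes $n\times n$ complex matrices, $\mathrm{Tr}$ the trace. Positive linear maps preserve positive semidefiniteness; unital means $\Phi(I)=I$. *)

theory Defs
  imports Complex_Main "Jordan_Normal_Form.Matrix"
begin

text \<open>Matrices in M_n are complex matrices in carrier_mat n n.\<close>

definition cadj :: "complex mat \<Rightarrow> complex mat" where
  "cadj A = mat (dim_col A) (dim_row A) (\<lambda>(i,j). cnj (A $$ (j,i)))"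

definition mtrace :: "complex mat \<Rightarrow> complex" where
  "mtrace A = (\<Sum>i<dim_row A. A $$ (i,i))"

definition hermitian :: "nat \<Rightarrow> complex mat \<Rightarrow> bool" where
  "hermitian n A \<longleftrightarrow> A \<in> carrier_mat n n \<and> cadj A = A"

definition qform :: "complex mat \<Rightarrow> complex vec \<Rightarrow> complex" where
  "qform A v = (\<Sum>i<dim_vec v. (A *\<^sub>v v) $ i * cnj (v $ i))"

definition pos_semidef :: "nat \<Rightarrow> complex mat \<Rightarrow> bool" where
  "pos_semidef n A \<longleftrightarrow> hermitian n A \<and>
     (\<forall>v \<in> carrier_vec n. 0 \<le> Re (qform A v))"

definition pos_def :: "nat \<Rightarrow> complex mat \<Rightarrow> bool" where
  "pos_def n A \<longleftrightarrow> hermitian n A \<and>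
     (\<forall>v \<in> carrier_vec n. v \<noteq> 0\<^sub>v n \<longrightarrow> 0 < Re (qform A v))"

definition unitary :: "nat \<Rightarrow> complex mat \<Rightarrow> bool" where
  "unitary n U \<longleftrightarrow> U \<in> carrier_mat n n \<and> cadj U * U = 1\<^sub>m n"

definition spectral_decomp :: "nat \<Rightarrow> complex mat \<Rightarrow> complex mat \<Rightarrow> (nat \<Rightarrow> real) \<Rightarrow> bool" where
  "spectral_decomp n A U d \<longleftrightarrow> unitary n U \<and>
     A = U * mat_diag n (\<lambda>i. complex_of_real (d i)) * cadj U"

text \<open>Real power A^p of a (positive definite) Hermitian matrix via the functional calculus:
  A^p = U diag(d_i powr p) U^*, for any spectral decomposition (the result does not depend on it).\<close>
definition mat_powr :: "complex mat \<Rightarrow> real \<Rightarrow> complex mat" where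
  "mat_powr A p = (let n = dim_row A; (U, d) = (SOME (U, d). spectral_decomp n A U d)
     in U * mat_diag n (\<lambda>i. complex_of_real (d i powr p)) * cadj U)"

definition linear_map_mat :: "nat \<Rightarrow> nat \<Rightarrow> (complex mat \<Rightarrow> complex mat) \<Rightarrow> bool" where
  "linear_map_mat k n \<Phi> \<longleftrightarrow>
     (\<forall>X \<in> carrier_mat k k. \<Phi> X \<in> carrier_mat n n) \<and>
     (\<forall>X \<in> carrier_mat k k. \<forall>Y \<in> carrier_mat k k. \<Phi> (X + Y) = \<Phi> X + \<Phi> Y) \<and>
     (\<forall>c. \<forall>X \<in> carrier_mat k k. \<Phi> (c \<cdot>\<^sub>m X) = c \<cdot>\<^sub>m \<Phi> X)"

definition positive_map :: "nat \<Rightarrow> nat \<Rightarrow> (complex mat \<Rightarrow> complex mat) \<Rightarrow> bool" where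
  "positive_map k n \<Phi> \<longleftrightarrow> (\<forall>X. pos_semidef k X \<longrightarrow> pos_semidef n (\<Phi> X))"

definition unital_map :: "nat \<Rightarrow> nat \<Rightarrow> (complex mat \<Rightarrow> complex mat) \<Rightarrow> bool" where
  "unital_map k n \<Phi> \<longleftrightarrow> \<Phi> (1\<^sub>m k) = 1\<^sub>m n"

end

(* Since A \<le> A + B in the Loewner order, the Loewner-Heinz inequality (t \<mapsto> t^p is operator
   monotone for 0 < p \<le> 1 and operator antitone for -1 \<le> p < 0) and the positivity of \<Phi> give
   \<Phi>(A^p) \<le> \<Phi>((A+B)^p) for p > 0 and the reverse inequality for p < 0.  The exponent q = -1/p
   makes t \<mapsto> t^q convex and, respectively, decreasing or increasing, so in both cases
   Tr \<Phi>((A+B)^p)^q \<le> Tr \<Phi>(A^p)^q; the B-term on the right is nonnegative.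

   Loewner-Heinz is reduced to the antitonicity of resolvents, s \<mapsto> <(s + X)^-1 v, v>, via
   t^\<alpha> = K\<^sub>\<alpha>^-1 \<integral>\<^sub>0^\<infinity> s^\<alpha> / (s + t) ds for -1 < \<alpha> < 0; the resolvent inequality comes from the
   variational formula <(s + X)^-1 v, v> = max\<^sub>x 2 Re <x, v> - s |x|^2 - <X x, x>.  The trace
   inequality is Jensen's inequality for the doubly stochastic matrix |<u\<^sub>i, v\<^sub>j>|^2 formed by
   two orthonormal eigenbases. *)
theory Submission
  imports Defs "Jordan_Normal_Form.Spectral_Radius" "HOL-Analysis.Analysis"
begin

unbundle no vec_syntax
hide_const (open) Finite_Cartesian_Product.vec Finite_Cartesian_Product.vec_nth
  Finite_Cartesian_Product.mat Finite_Cartesian_Product.row Finite_Cartesian_Product.column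
hide_type (open) Finite_Cartesian_Product.vec

section \<open>Adjoints, unitary and Hermitian matrices\<close>

lemma cadj_dims [simp]: "dim_row (cadj A) = dim_col A" "dim_col (cadj A) = dim_row A"
  by (auto simp: cadj_def)

lemma cadj_index [simp]: "i < dim_col A \<Longrightarrow> j < dim_row A \<Longrightarrow> cadj A $$ (i,j) = cnj (A $$ (j,i))"
  by (auto simp: cadj_def)

lemma cadj_carrier_mat [simp]: "A \<in> carrier_mat n m \<Longrightarrow> cadj A \<in> carrier_mat m n"
  by (auto simp: cadj_def)

lemma cadj_mult:
  assumes "A \<in> carrier_mat n k" "B \<in> carrier_mat k m"
  shows "cadj (A * B) = cadj B * cadj A"
  using assms by (intro eq_matI) (auto simp: scalar_prod_def cadj_def mult.commute)

lemma cadj_cadj [simp]: "cadj (cadj A) = A"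
  by (intro eq_matI) (auto simp: cadj_def)

lemma cnj_mult_self: "cnj x * x = complex_of_real ((cmod x)\<^sup>2)"
  using complex_norm_square[of x] by (simp add: mult.commute del: of_real_power)

lemma sum_delta_mult:
  assumes "(i::nat) < n" shows "(\<Sum>k<n. (if k = i then 1 else 0) * f k) = (f i :: 'a::comm_ring_1)"
proof -
  have "(\<Sum>k<n. (if k = i then 1 else 0) * f k) = (\<Sum>k<n. if k = i then f k else 0)"
    by (intro sum.cong) auto
  also have "\<dots> = f i" using assms by (subst sum.delta) auto
  finally show ?thesis .
qed

lemma unitary_carrier: "unitary n U \<Longrightarrow> U \<in> carrier_mat n n"
  by (simp add: unitary_def)

lemma unitary_one: "unitary n (1\<^sub>m n)"
  unfolding unitary_def by (auto intro!: eq_matI simp: cadj_def)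

lemma unitary_right_inverse:
  assumes "unitary n U" shows "U * cadj U = 1\<^sub>m n"
proof -
  have U: "U \<in> carrier_mat n n" and h: "cadj U * U = 1\<^sub>m n" using assms by (auto simp: unitary_def)
  then show ?thesis using mat_mult_left_right_inverse[OF _ U h] by simp
qed

lemma unitary_mult:
  assumes "unitary n U" "unitary n V" shows "unitary n (U * V)"
proof -
  have U: "U \<in> carrier_mat n n" and V: "V \<in> carrier_mat n n" using assms by (auto simp: unitary_def)
  have "cadj (U * V) * (U * V) = cadj V * ((cadj U * U) * V)"
    using U V by (simp add: cadj_mult[OF U V] assoc_mult_mat[of _ n n _ n _ n])
  also have "\<dots> = 1\<^sub>m n" using assms V by (simp add: unitary_def)
  finally show ?thesis using U V by (simp add: unitary_def)
qed

lemma unitary_col_inner: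
  assumes "unitary n U" "i < n" "j < n"
  shows "(\<Sum>k<n. cnj (U $$ (k,i)) * U $$ (k,j)) = (if i = j then 1 else 0)"
proof -
  have U: "U \<in> carrier_mat n n" and h: "cadj U * U = 1\<^sub>m n" using assms by (auto simp: unitary_def)
  have "(cadj U * U) $$ (i,j) = (\<Sum>k<n. cnj (U $$ (k,i)) * U $$ (k,j))"
    using U assms by (auto simp: scalar_prod_def atLeast0LessThan)
  then show ?thesis using h assms by simp
qed

lemma unitary_row_inner:
  assumes "unitary n U" "i < n" "j < n"
  shows "(\<Sum>k<n. U $$ (i,k) * cnj (U $$ (j,k))) = (if i = j then 1 else 0)"
proof -
  have U: "U \<in> carrier_mat n n" using assms by (auto simp: unitary_def)
  have "(U * cadj U) $$ (i,j) = (\<Sum>k<n. U $$ (i,k) * cnj (U $$ (j,k)))"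
    using U assms by (auto simp: scalar_prod_def atLeast0LessThan)
  then show ?thesis using unitary_right_inverse[OF assms(1)] assms by simp
qed

lemma unitary_col_norm:
  assumes "unitary n U" "i < n"
  shows "(\<Sum>k<n. (cmod (U $$ (k,i)))\<^sup>2) = 1"
proof -
  have "complex_of_real (\<Sum>k<n. (cmod (U $$ (k,i)))\<^sup>2) = (\<Sum>k<n. cnj (U $$ (k,i)) * U $$ (k,i))"
    by (simp add: cnj_mult_self del: of_real_power)
  also have "\<dots> = 1" using unitary_col_inner[OF assms(1,2,2)] by simp
  finally show ?thesis by (metis of_real_1 of_real_eq_iff)
qed

lemma hermitian_cnj_index:
  assumes "hermitian n Z" "i < n" "j < n"
  shows "Z $$ (j,i) = cnj (Z $$ (i,j))"
proof -
  have "cadj Z = Z" "Z \<in> carrier_mat n n" using assms by (auto simp: hermitian_def)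
  then have "Z $$ (j,i) = cadj Z $$ (j,i)" by simp
  also have "\<dots> = cnj (Z $$ (i,j))" using assms \<open>Z \<in> carrier_mat n n\<close> by auto
  finally show ?thesis .
qed

lemma hermitian_add:
  assumes "hermitian n X" "hermitian n Y"
  shows "hermitian n (X + Y)"
proof -
  have Xc: "X \<in> carrier_mat n n" and Yc: "Y \<in> carrier_mat n n" using assms by (auto simp: hermitian_def)
  have "cadj (X + Y) = X + Y"
  proof (rule eq_matI)
    fix i j assume "i < dim_row (X + Y)" "j < dim_col (X + Y)"
    then have i: "i < n" and j: "j < n" using Xc Yc by auto
    have "cadj (X + Y) $$ (i,j) = cnj (X $$ (j,i)) + cnj (Y $$ (j,i))" using Xc Yc i j by simp
    also have "\<dots> = X $$ (i,j) + Y $$ (i,j)"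
      using hermitian_cnj_index[OF assms(1) j i] hermitian_cnj_index[OF assms(2) j i] by simp
    finally show "cadj (X + Y) $$ (i,j) = (X + Y) $$ (i,j)" using Xc Yc i j by simp
  qed (use Xc Yc in auto)
  then show ?thesis using Xc Yc unfolding hermitian_def by auto
qed

lemma hermitian_diff:
  assumes "hermitian n X" "hermitian n Y"
  shows "hermitian n (X - Y)"
proof -
  have Xc: "X \<in> carrier_mat n n" and Yc: "Y \<in> carrier_mat n n" using assms by (auto simp: hermitian_def)
  have "cadj (X - Y) = X - Y"
  proof (rule eq_matI)
    fix i j assume "i < dim_row (X - Y)" "j < dim_col (X - Y)"
    then have i: "i < n" and j: "j < n" using Xc Yc by auto
    have "cadj (X - Y) $$ (i,j) = cnj (X $$ (j,i)) - cnj (Y $$ (j,i))" using Xc Yc i j by simp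
    also have "\<dots> = X $$ (i,j) - Y $$ (i,j)"
      using hermitian_cnj_index[OF assms(1) j i] hermitian_cnj_index[OF assms(2) j i] by simp
    finally show "cadj (X - Y) $$ (i,j) = (X - Y) $$ (i,j)" using Xc Yc i j by simp
  qed (use Xc Yc in auto)
  then show ?thesis using Xc Yc unfolding hermitian_def by auto
qed

lemma hermitian_smult_one: "hermitian n (complex_of_real c \<cdot>\<^sub>m 1\<^sub>m n)"
  unfolding hermitian_def by (auto intro!: eq_matI simp: cadj_def)

lemma hermitian_adj_mult_mult:
  assumes X: "hermitian n X" and W: "W \<in> carrier_mat n n"
  shows "hermitian n (cadj W * X * W)"
proof -
  have Xc: "X \<in> carrier_mat n n" and Xh: "cadj X = X" using X by (auto simp: hermitian_def)
  have "cadj (cadj W * X * W) = cadj W * cadj (cadj W * X)"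
    using Xc W by (intro cadj_mult[of _ n n]) auto
  also have "\<dots> = cadj W * (X * W)"
    using Xc W Xh by (subst cadj_mult[of _ n n]) auto
  also have "\<dots> = cadj W * X * W" using Xc W by (intro assoc_mult_mat[symmetric]) auto
  finally show ?thesis using Xc W unfolding hermitian_def by auto
qed

definition coord :: "nat \<Rightarrow> complex mat \<Rightarrow> complex vec \<Rightarrow> nat \<Rightarrow> complex" where
  "coord n U v j = (\<Sum>k<n. cnj (U $$ (k,j)) * v $ k)"

lemma conj_diag_index:
  assumes U: "U \<in> carrier_mat n n" and i: "i < n" and k: "k < n"
  shows "(U * mat_diag n f * cadj U) $$ (i,k) = (\<Sum>j<n. U $$ (i,j) * f j * cnj (U $$ (k,j)))"
  using U i k by (simp add: mat_diag_mult_right[OF U]) (auto simp: scalar_prod_def atLeast0LessThan)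

lemma hermitian_conj_diag:
  assumes U: "U \<in> carrier_mat n n"
  shows "hermitian n (U * mat_diag n (\<lambda>i. complex_of_real (f i)) * cadj U)"
proof -
  let ?M = "U * mat_diag n (\<lambda>i. complex_of_real (f i)) * cadj U"
  have M: "?M \<in> carrier_mat n n" using U by auto
  have "cadj ?M = ?M"
  proof (rule eq_matI)
    fix i k assume "i < dim_row ?M" "k < dim_col ?M"
    then have i: "i < n" and k: "k < n" using M by auto
    have "cadj ?M $$ (i,k) = cnj (?M $$ (k,i))" using i k M by auto
    also have "\<dots> = ?M $$ (i,k)" unfolding conj_diag_index[OF U k i] conj_diag_index[OF U i k]
      by (simp add: mult.commute mult.left_commute)
    finally show "cadj ?M $$ (i,k) = ?M $$ (i,k)" .
  qed (use M in auto)
  then show ?thesis using M unfolding hermitian_def by auto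
qed

lemma qform_conj_diag:
  assumes U: "U \<in> carrier_mat n n" and v: "v \<in> carrier_vec n"
  shows "qform (U * mat_diag n f * cadj U) v = (\<Sum>j<n. f j * complex_of_real ((cmod (coord n U v j))\<^sup>2))"
proof -
  let ?M = "U * mat_diag n f * cadj U"
  have M: "?M \<in> carrier_mat n n" using U by auto
  have "qform ?M v = (\<Sum>i<n. (\<Sum>k<n. ?M $$ (i,k) * v $ k) * cnj (v $ i))"
    unfolding qform_def using M v by (auto simp: scalar_prod_def atLeast0LessThan intro!: sum.cong)
  also have "\<dots> = (\<Sum>i<n. \<Sum>k<n. \<Sum>j<n. U $$ (i,j) * f j * cnj (U $$ (k,j)) * v $ k * cnj (v $ i))"
    by (simp add: conj_diag_index[OF U] sum_distrib_right)
  also have "\<dots> = (\<Sum>j<n. \<Sum>i<n. \<Sum>k<n. U $$ (i,j) * f j * cnj (U $$ (k,j)) * v $ k * cnj (v $ i))"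
    by (subst sum.swap, rule sum.cong[OF refl], rule sum.swap)
  also have "\<dots> = (\<Sum>j<n. f j * ((\<Sum>k<n. cnj (U $$ (k,j)) * v $ k) * (\<Sum>i<n. U $$ (i,j) * cnj (v $ i))))"
    by (rule sum.cong[OF refl], subst sum_product, subst sum.swap, simp add: sum_distrib_left algebra_simps)
  also have "\<dots> = (\<Sum>j<n. f j * (coord n U v j * cnj (coord n U v j)))"
    by (simp add: coord_def)
  also have "\<dots> = (\<Sum>j<n. f j * complex_of_real ((cmod (coord n U v j))\<^sup>2))"
    by (simp add: complex_norm_square del: of_real_power)
  finally show ?thesis .
qed

lemma mtrace_conj_diag:
  assumes U: "unitary n U"
  shows "mtrace (U * mat_diag n f * cadj U) = (\<Sum>j<n. f j)"
proof -
  have Uc: "U \<in> carrier_mat n n" using U by (auto simp: unitary_def)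
  have "dim_row (U * mat_diag n f * cadj U) = n" using Uc by simp
  then have "mtrace (U * mat_diag n f * cadj U) = (\<Sum>i<n. \<Sum>j<n. U $$ (i,j) * f j * cnj (U $$ (i,j)))"
    unfolding mtrace_def by (intro sum.cong refl conj_diag_index[OF Uc]) auto
  also have "\<dots> = (\<Sum>j<n. f j * (\<Sum>i<n. cnj (U $$ (i,j)) * U $$ (i,j)))"
    by (subst sum.swap) (auto simp: sum_distrib_left algebra_simps intro!: sum.cong)
  also have "\<dots> = (\<Sum>j<n. f j)"
    by (auto simp: unitary_col_inner[OF U] intro!: sum.cong)
  finally show ?thesis .
qed

lemma coord_inner:
  assumes U: "unitary n U"
  shows "(\<Sum>j<n. coord n U v j * cnj (coord n U w j)) = (\<Sum>k<n. v $ k * cnj (w $ k))"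
proof -
  have "(\<Sum>j<n. coord n U v j * cnj (coord n U w j))
      = (\<Sum>j<n. \<Sum>l<n. \<Sum>k<n. v $ k * (cnj (w $ l) * (U $$ (l,j) * cnj (U $$ (k,j)))))"
    by (simp add: coord_def sum_product sum_distrib_left algebra_simps)
  also have "\<dots> = (\<Sum>l<n. \<Sum>k<n. \<Sum>j<n. v $ k * (cnj (w $ l) * (U $$ (l,j) * cnj (U $$ (k,j)))))"
    by (subst sum.swap, rule sum.cong[OF refl], rule sum.swap)
  also have "\<dots> = (\<Sum>l<n. \<Sum>k<n. v $ k * cnj (w $ l) * (if l = k then 1 else 0))"
    by (auto simp: sum_distrib_left[symmetric] unitary_row_inner[OF U] mult.assoc intro!: sum.cong)
  also have "\<dots> = (\<Sum>k<n. v $ k * cnj (w $ k))"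
    by (simp add: if_distrib cong: if_cong)
  finally show ?thesis .
qed

lemma coord_norm:
  assumes U: "unitary n U"
  shows "(\<Sum>j<n. (cmod (coord n U v j))\<^sup>2) = (\<Sum>k<n. (cmod (v $ k))\<^sup>2)"
proof -
  have "complex_of_real (\<Sum>j<n. (cmod (coord n U v j))\<^sup>2) = complex_of_real (\<Sum>k<n. (cmod (v $ k))\<^sup>2)"
    using coord_inner[OF U, of v v] by (simp add: complex_norm_square del: of_real_power)
  then show ?thesis using of_real_eq_iff by blast
qed

lemma coord_col:
  assumes U: "unitary n U" and i: "i < n" and j: "j < n"
  shows "coord n U (col U i) j = (if i = j then 1 else 0)"
proof -
  have "coord n U (col U i) j = (\<Sum>k<n. cnj (U $$ (k,j)) * U $$ (k,i))"
    unfolding coord_def using unitary_carrier[OF U] i by (auto intro!: sum.cong)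
  then show ?thesis using unitary_col_inner[OF U j i] by auto
qed

lemma sum_mult_coord_col_sq:
  assumes U: "unitary n U" and i: "i < n"
  shows "(\<Sum>j<n. f j * (cmod (coord n U (col U i) j))\<^sup>2) = f i"
proof -
  have "(\<Sum>j<n. f j * (cmod (coord n U (col U i) j))\<^sup>2) = (\<Sum>j<n. (if j = i then 1 else 0) * f j)"
    using coord_col[OF U i] i by (intro sum.cong refl) auto
  also have "\<dots> = f i" using sum_delta_mult[OF i] .
  finally show ?thesis .
qed

lemma coord_col_swap:
  assumes U: "U \<in> carrier_mat n n" and V: "V \<in> carrier_mat n n" and i: "i < n" and j: "j < n"
  shows "coord n U (col V i) j = cnj (coord n V (col U j) i)"
  unfolding coord_def using U V i j by (auto intro!: sum.cong simp: mult.commute)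

lemma coord_mult_vec:
  assumes U: "unitary n U" and y: "y \<in> carrier_vec n" and j: "j < n"
  shows "coord n U (U *\<^sub>v y) j = y $ j"
proof -
  have Uc: "U \<in> carrier_mat n n" using U by (simp add: unitary_def)
  have "coord n U (U *\<^sub>v y) j = (\<Sum>l<n. cnj (U $$ (l,j)) * (\<Sum>m<n. U $$ (l,m) * y $ m))"
    unfolding coord_def using Uc y by (auto simp: scalar_prod_def atLeast0LessThan intro!: sum.cong)
  also have "\<dots> = (\<Sum>m<n. (\<Sum>l<n. cnj (U $$ (l,j)) * U $$ (l,m)) * y $ m)"
    by (simp add: sum_distrib_left sum_distrib_right algebra_simps) (rule sum.swap)
  also have "\<dots> = (\<Sum>m<n. (if m = j then 1 else 0) * y $ m)"
    using j by (intro sum.cong refl) (auto simp: unitary_col_inner[OF U])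
  also have "\<dots> = y $ j" using sum_delta_mult[OF j] .
  finally show ?thesis .
qed

section \<open>The spectral theorem for Hermitian matrices\<close>

lemma sum_cmod_sq_pos:
  assumes "v \<in> carrier_vec n" "v \<noteq> 0\<^sub>v n"
  shows "0 < (\<Sum>k<n. (cmod (v $ k))\<^sup>2)"
proof -
  obtain i where i: "i < n" "v $ i \<noteq> 0"
    using assms by (metis eq_vecI carrier_vecD index_zero_vec(1) index_zero_vec(2))
  have "(cmod (v $ i))\<^sup>2 \<le> (\<Sum>k<n. (cmod (v $ k))\<^sup>2)" using i by (intro member_le_sum) auto
  moreover have "(cmod (v $ i))\<^sup>2 > 0" using i by simp
  ultimately show ?thesis by linarith
qed

lemma householder_unitary:
  assumes w: "w \<in> carrier_vec n" and s: "(\<Sum>k<n. cnj (w $ k) * w $ k) = complex_of_real s"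
    and b: "\<beta> * \<beta> * s = 2 * \<beta>"
  shows "unitary n (Matrix.mat n n (\<lambda>(i,j). (if i = j then 1 else 0) - complex_of_real \<beta> * w $ i * cnj (w $ j)))"
    (is "unitary n ?H")
proof -
  have "cadj ?H * ?H = 1\<^sub>m n"
  proof (rule eq_matI)
    fix i j assume "i < dim_row (1\<^sub>m n :: complex mat)" "j < dim_col (1\<^sub>m n :: complex mat)"
    then have i: "i < n" and j: "j < n" by auto
    let ?b = "complex_of_real \<beta>"
    have "(cadj ?H * ?H) $$ (i,j) = (\<Sum>k<n. ((if k = i then 1 else 0) - ?b * cnj (w $ k) * w $ i) *
        ((if k = j then 1 else 0) - ?b * w $ k * cnj (w $ j)))"
      using i j by (auto simp: scalar_prod_def atLeast0LessThan intro!: sum.cong)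
    also have "\<dots> = (\<Sum>k<n. (if k = i then 1 else 0) * (if k = j then 1 else 0))
        - (\<Sum>k<n. (if k = i then 1 else 0) * (?b * w $ k * cnj (w $ j)))
        - (\<Sum>k<n. (if k = j then 1 else 0) * (?b * cnj (w $ k) * w $ i))
        + ?b * ?b * w $ i * cnj (w $ j) * (\<Sum>k<n. cnj (w $ k) * w $ k)"
      by (simp add: sum_subtractf sum.distrib sum_distrib_left algebra_simps)
    also have "\<dots> = (if i = j then 1 else 0) - ?b * w $ i * cnj (w $ j) - ?b * w $ i * cnj (w $ j)
        + ?b * ?b * w $ i * cnj (w $ j) * complex_of_real s"
      using i j by (simp only: s sum_delta_mult) simp
    also have "\<dots> = (if i = j then 1 else 0)"
    proof -
      have "?b * ?b * complex_of_real s = 2 * ?b" using b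
        by (metis of_real_mult of_real_numeral)
      then show ?thesis by (simp add: algebra_simps) metis
    qed
    finally show "(cadj ?H * ?H) $$ (i,j) = 1\<^sub>m n $$ (i,j)" using i j by simp
  qed auto
  then show ?thesis unfolding unitary_def by auto
qed

lemma sum_cnj_mult_unit_vec_diff:
  fixes b :: "complex vec"
  assumes m: "m < n" and bnorm: "(\<Sum>k<n. cnj (b $ k) * b $ k) = 1" and bm: "b $ m = complex_of_real t"
  shows "(\<Sum>k<n. cnj ((if k = m then 1 else 0) - b $ k) * ((if k = m then 1 else 0) - b $ k))
    = 2 - 2 * complex_of_real t"
proof -
  have "(\<Sum>k<n. cnj ((if k = m then 1 else 0) - b $ k) * ((if k = m then 1 else 0) - b $ k))
      = (\<Sum>k<n. (if k = m then 1 else 0) * (if k = m then 1 else 0))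
      - (\<Sum>k<n. (if k = m then 1 else 0) * b $ k) - (\<Sum>k<n. (if k = m then 1 else 0) * cnj (b $ k))
      + (\<Sum>k<n. cnj (b $ k) * b $ k)"
    unfolding sum.distrib[symmetric] sum_subtractf[symmetric]
    by (intro sum.cong refl) (simp add: algebra_simps)
  also have "\<dots> = 2 - 2 * complex_of_real t"
    using m by (simp only: sum_delta_mult bnorm bm) simp
  finally show ?thesis .
qed

text \<open>The reflection in the hyperplane orthogonal to \<open>w = e\<^sub>m - b\<close> swaps \<open>e\<^sub>m\<close> and \<open>b\<close>;
  this needs \<open>b\<^sub>m\<close> to be real.\<close>

lemma householder_maps_unit_vec:
  assumes bc: "b \<in> carrier_vec n" and m: "m < n"
    and bnorm: "(\<Sum>k<n. cnj (b $ k) * b $ k) = 1" and bm: "b $ m = complex_of_real t"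
    and neq: "b \<noteq> unit_vec n m"
  shows "\<exists>H. unitary n H \<and> (\<forall>j<n. j \<noteq> m \<longrightarrow> b $ j = 0 \<longrightarrow> col H j = unit_vec n j) \<and> col H m = b"
proof -
  define w where "w = vec n (\<lambda>i. (if i = m then 1 else 0) - b $ i)"
  have wc: "w \<in> carrier_vec n" unfolding w_def by auto
  have wi: "\<And>i. i < n \<Longrightarrow> w $ i = (if i = m then 1 else 0) - b $ i" unfolding w_def by auto
  define sw where "sw = (\<Sum>k<n. (cmod (w $ k))\<^sup>2)"
  have sw_c: "(\<Sum>k<n. cnj (w $ k) * w $ k) = complex_of_real sw"
    unfolding sw_def by (simp add: cnj_mult_self del: of_real_power)
  have "(\<Sum>k<n. cnj (w $ k) * w $ k)
      = (\<Sum>k<n. cnj ((if k = m then 1 else 0) - b $ k) * ((if k = m then 1 else 0) - b $ k))"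
    using wi by (intro sum.cong) auto
  also have "\<dots> = 2 - 2 * complex_of_real t" by (rule sum_cnj_mult_unit_vec_diff[OF m bnorm bm])
  finally have "complex_of_real sw = complex_of_real (2 - 2 * t)" using sw_c by simp
  then have sw2: "sw = 2 - 2 * t" by (simp only: of_real_eq_iff)
  have "w \<noteq> 0\<^sub>v n"
  proof
    assume "w = 0\<^sub>v n"
    then have "b = unit_vec n m" using bc wi by (intro eq_vecI) (auto simp: unit_vec_def)
    then show False using neq by simp
  qed
  then have swpos: "sw > 0" unfolding sw_def using sum_cmod_sq_pos[OF wc] by simp
  define \<beta> where "\<beta> = 2 / sw"
  have beta: "\<beta> * \<beta> * sw = 2 * \<beta>" unfolding \<beta>_def using swpos by (simp add: field_simps)
  have beta1: "complex_of_real \<beta> * (1 - complex_of_real t) = 1"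
  proof -
    have "\<beta> * (1 - t) = 1" unfolding \<beta>_def sw2 using swpos sw2 by (simp add: field_simps)
    then show ?thesis by (metis of_real_1 of_real_diff of_real_mult)
  qed
  define H where "H = Matrix.mat n n (\<lambda>(i,j). (if i = j then 1 else 0) - complex_of_real \<beta> * w $ i * cnj (w $ j))"
  have "unitary n H" unfolding H_def using householder_unitary[OF wc sw_c beta] .
  moreover have "col H j = unit_vec n j" if "j < n" "j \<noteq> m" "b $ j = 0" for j
    using that wi unfolding H_def by (intro eq_vecI) auto
  moreover have "col H m = b"
  proof (rule eq_vecI)
    fix i assume "i < dim_vec b"
    then have i: "i < n" using bc by auto
    have wm: "cnj (w $ m) = 1 - complex_of_real t" using wi[OF m] bm by simp
    have "col H m $ i = (if i = m then 1 else 0) - complex_of_real \<beta> * w $ i * cnj (w $ m)"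
      unfolding H_def using i m by auto
    also have "\<dots> = (if i = m then 1 else 0) - w $ i" using beta1 wm
      by (simp add: mult.assoc mult.left_commute[of _ "w $ i"])
    also have "\<dots> = b $ i" using wi[OF i] by simp
    finally show "col H m $ i = b $ i" .
  qed (use bc H_def in auto)
  ultimately show ?thesis by blast
qed

lemma householder_reflection_exists:
  assumes z: "z \<in> carrier_vec n" "z \<noteq> 0\<^sub>v n" and m: "m < n" and zm: "\<forall>i<m. z $ i = 0"
  shows "\<exists>H c. unitary n H \<and> (\<forall>j<m. col H j = unit_vec n j) \<and> col H m = c \<cdot>\<^sub>v z"
proof -
  define N where "N = (\<Sum>i<n. (cmod (z $ i))\<^sup>2)"
  have Npos: "N > 0" unfolding N_def using sum_cmod_sq_pos[OF z] .
  define \<alpha> where "\<alpha> = (if z $ m = 0 then 1 else cnj (z $ m) / complex_of_real (cmod (z $ m)))"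
  have \<alpha>1: "cmod \<alpha> = 1" unfolding \<alpha>_def by (auto simp: norm_divide)
  have \<alpha>z: "\<alpha> * z $ m = complex_of_real (cmod (z $ m))"
  proof (cases "z $ m = 0")
    case False
    then have "\<alpha> * z $ m = complex_of_real ((cmod (z $ m))\<^sup>2) / complex_of_real (cmod (z $ m))"
      unfolding \<alpha>_def by (simp only: cnj_mult_self[symmetric]) simp
    also have "\<dots> = complex_of_real (cmod (z $ m))" using False
      by (simp add: power2_eq_square)
    finally show ?thesis .
  qed (simp add: \<alpha>_def)
  define c where "c = \<alpha> / complex_of_real (sqrt N)"
  have cm: "cmod c * cmod c * N = 1" unfolding c_def using \<alpha>1 Npos
    by (simp add: norm_divide)
  define b where "b = c \<cdot>\<^sub>v z"
  have bc: "b \<in> carrier_vec n" using z unfolding b_def by auto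
  have bi: "\<And>i. i < n \<Longrightarrow> b $ i = c * z $ i" using z unfolding b_def by auto
  have bm: "b $ m = complex_of_real (cmod (z $ m) / sqrt N)" using bi[OF m] \<alpha>z unfolding c_def
    by (simp add: field_simps)
  have bnorm: "(\<Sum>k<n. cnj (b $ k) * b $ k) = 1"
  proof -
    have "(\<Sum>k<n. cnj (b $ k) * b $ k) = (\<Sum>k<n. complex_of_real ((cmod c * cmod c) * (cmod (z $ k))\<^sup>2))"
      by (intro sum.cong refl, simp only: cnj_mult_self, simp add: bi norm_mult power_mult_distrib power2_eq_square)
    also have "\<dots> = complex_of_real ((cmod c * cmod c) * N)"
      unfolding N_def by (simp add: sum_distrib_left)
    finally show ?thesis using cm by simp
  qed
  show ?thesis
  proof (cases "b = unit_vec n m")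
    case True
    then show ?thesis using unitary_one m unfolding b_def by (intro exI[of _ "1\<^sub>m n"] exI[of _ c]) auto
  next
    case False
    have "\<forall>j<m. b $ j = 0" using zm m bi by auto
    then show ?thesis using householder_maps_unit_vec[OF bc m bnorm bm False] m unfolding b_def by auto
  qed
qed

lemma sum_lessThan_skip_zeros:
  fixes g z :: "nat \<Rightarrow> complex"
  assumes "m \<le> n" "\<forall>k<m. z k = 0"
  shows "(\<Sum>k<n. g k * z k) = (\<Sum>k<n-m. g (m+k) * z (m+k))"
proof -
  have "{..<n} = {..<m} \<union> {m..<n}" using assms by auto
  then have "(\<Sum>k<n. g k * z k) = (\<Sum>k\<in>{..<m} \<union> {m..<n}. g k * z k)" by simp
  also have "\<dots> = (\<Sum>k<m. g k * z k) + (\<Sum>k\<in>{m..<n}. g k * z k)"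
    by (rule sum.union_disjoint) auto
  also have "(\<Sum>k<m. g k * z k) = 0" using assms by auto
  also have "(\<Sum>k\<in>{m..<n}. g k * z k) = (\<Sum>k<n-m. g (m+k) * z (m+k))"
    by (rule sum.reindex_bij_witness[of _ "\<lambda>k. m + k" "\<lambda>k. k - m"]) auto
  finally show ?thesis by simp
qed

text \<open>The eigenvector is lifted from an eigenvector of the trailing principal block, which
  exists by the fundamental theorem of algebra.\<close>

lemma hermitian_trailing_eigenvector:
  assumes Zh: "hermitian n Z" and m: "m < n"
    and Zcol: "\<And>i j. i < n \<Longrightarrow> j < m \<Longrightarrow> i \<noteq> j \<Longrightarrow> Z $$ (i,j) = 0"
  shows "\<exists>z \<mu>. z \<in> carrier_vec n \<and> z \<noteq> 0\<^sub>v n \<and> (\<forall>i<m. z $ i = 0) \<and> Z *\<^sub>v z = \<mu> \<cdot>\<^sub>v z"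
proof -
  have Zc: "Z \<in> carrier_mat n n" using Zh by (simp add: hermitian_def)
  have Zrow: "Z $$ (j,i) = 0" if "i < n" "j < m" "i \<noteq> j" for i j
    using hermitian_cnj_index[OF Zh, of i j] Zcol[of i j] that m by simp
  define Z3 where "Z3 = Matrix.mat (n-m) (n-m) (\<lambda>(i,j). Z $$ (m+i, m+j))"
  have Z3c: "Z3 \<in> carrier_mat (n-m) (n-m)" unfolding Z3_def by auto
  from spectrum_non_empty[OF Z3c] m obtain \<mu> where "eigenvalue Z3 \<mu>"
    unfolding spectrum_def by auto
  then obtain y where y: "y \<in> carrier_vec (n-m)" "y \<noteq> 0\<^sub>v (n-m)" "Z3 *\<^sub>v y = \<mu> \<cdot>\<^sub>v y"
    unfolding eigenvalue_def eigenvector_def using Z3c by auto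
  define z where "z = vec n (\<lambda>i. if i < m then 0 else y $ (i - m))"
  have zc: "z \<in> carrier_vec n" unfolding z_def by auto
  have zm: "\<forall>i<m. z $ i = 0" unfolding z_def using m by auto
  have "z \<noteq> 0\<^sub>v n"
  proof
    assume "z = 0\<^sub>v n"
    have "\<And>i. i < n - m \<Longrightarrow> z $ (m+i) = y $ i" unfolding z_def by simp
    moreover have "\<And>i. i < n - m \<Longrightarrow> z $ (m+i) = 0" using \<open>z = 0\<^sub>v n\<close> by simp
    ultimately have "y = 0\<^sub>v (n-m)" using y(1) by (intro eq_vecI) auto
    then show False using y(2) by simp
  qed
  moreover have "Z *\<^sub>v z = \<mu> \<cdot>\<^sub>v z"
  proof (rule eq_vecI)
    fix i assume "i < dim_vec (\<mu> \<cdot>\<^sub>v z)"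
    then have i: "i < n" using zc by auto
    have "(Z *\<^sub>v z) $ i = (\<Sum>k<n. Z $$ (i,k) * z $ k)"
      using Zc zc i by (auto simp: scalar_prod_def atLeast0LessThan)
    also have "\<dots> = (\<Sum>k<n-m. Z $$ (i,m+k) * y $ k)"
      using sum_lessThan_skip_zeros[of m n "\<lambda>k. z $ k" "\<lambda>k. Z $$ (i,k)"] m zm
      unfolding z_def by (auto intro!: sum.cong)
    also have "\<dots> = \<mu> * z $ i"
    proof (cases "i < m")
      case True
      then show ?thesis using Zrow[of "m+_" i] zm by auto
    next
      case False
      then have "(\<Sum>k<n-m. Z $$ (i,m+k) * y $ k) = (Z3 *\<^sub>v y) $ (i - m)"
        using i y(1) Z3c unfolding Z3_def by (auto simp: scalar_prod_def atLeast0LessThan intro!: sum.cong)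
      also have "\<dots> = \<mu> * y $ (i - m)" using y(3) y(1) i False by auto
      finally show ?thesis using False i unfolding z_def by auto
    qed
    finally show "(Z *\<^sub>v z) $ i = (\<mu> \<cdot>\<^sub>v z) $ i" using i zc by auto
  qed (use Zc zc in auto)
  ultimately show ?thesis using zc zm by blast
qed

lemma adj_mult_mult_eigen_col:
  assumes W: "unitary n W" and X: "X \<in> carrier_mat n n" and i: "i < n" and j: "j < n"
    and ev: "X *\<^sub>v col W j = \<mu> \<cdot>\<^sub>v col W j"
  shows "(cadj W * X * W) $$ (i,j) = (if i = j then \<mu> else 0)"
proof -
  have Wc: "W \<in> carrier_mat n n" using W by (auto simp: unitary_def)
  have "cadj W * X * W = cadj W * (X * W)" using Wc X by (intro assoc_mult_mat) auto
  moreover have "col (X * W) j = X *\<^sub>v col W j" using Wc X j by (intro col_mult2) auto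
  ultimately have "(cadj W * X * W) $$ (i,j) = (\<Sum>k<n. cnj (W $$ (k,i)) * (X *\<^sub>v col W j) $ k)"
    using Wc X i j by (auto simp: scalar_prod_def atLeast0LessThan simp del: col_mult2 intro!: sum.cong)
  also have "\<dots> = (\<Sum>k<n. cnj (W $$ (k,i)) * (\<mu> * W $$ (k,j)))"
    unfolding ev using Wc j by (auto intro!: sum.cong)
  also have "\<dots> = \<mu> * (\<Sum>k<n. cnj (W $$ (k,i)) * W $$ (k,j))"
    by (auto simp: sum_distrib_left algebra_simps)
  finally show ?thesis using unitary_col_inner[OF W i j] by auto
qed

lemma mult_unit_vec_col:
  fixes W :: "complex mat"
  assumes "W \<in> carrier_mat n n" "j < n"
  shows "W *\<^sub>v unit_vec n j = col W j"
proof -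
  have "col (W * 1\<^sub>m n) j = W *\<^sub>v col (1\<^sub>m n) j" using assms by (intro col_mult2) auto
  then show ?thesis using assms right_mult_one_mat[of W n n] by simp
qed

lemma unitary_mult_adj_mult_mult:
  assumes W: "unitary n W" and X: "X \<in> carrier_mat n n"
  shows "W * (cadj W * X * W) = X * W"
proof -
  have Wc: "W \<in> carrier_mat n n" and a: "cadj W \<in> carrier_mat n n" using W by (auto simp: unitary_def)
  have "W * (cadj W * X * W) = (W * (cadj W * X)) * W" using a Wc X by (intro assoc_mult_mat[symmetric]) auto
  also have "W * (cadj W * X) = (W * cadj W) * X" using a Wc X by (intro assoc_mult_mat[symmetric]) auto
  also have "\<dots> = X" using unitary_right_inverse[OF W] X by simp
  finally show ?thesis .
qed

text \<open>The new basis \<open>W H\<close> keeps the first \<open>m\<close> columns of \<open>W\<close> and has as column \<open>m\<close> a multiple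
  of \<open>W z\<close>, where \<open>z\<close> is an eigenvector of \<open>W\<^sup>* X W\<close> vanishing on the first \<open>m\<close> coordinates.\<close>

lemma eigen_cols_extend:
  assumes X: "hermitian n X" and W: "unitary n W" and m: "m < n"
    and ev: "\<forall>j<m. \<exists>\<mu>. X *\<^sub>v col W j = \<mu> \<cdot>\<^sub>v col W j"
  shows "\<exists>W'. unitary n W' \<and> (\<forall>j<Suc m. \<exists>\<mu>. X *\<^sub>v col W' j = \<mu> \<cdot>\<^sub>v col W' j)"
proof -
  have Xc: "X \<in> carrier_mat n n" using X by (auto simp: hermitian_def)
  have Wc: "W \<in> carrier_mat n n" using W by (auto simp: unitary_def)
  define Z where "Z = cadj W * X * W"
  have "Z $$ (i,j) = 0" if i: "i < n" and j: "j < m" and ij: "i \<noteq> j" for i j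
  proof -
    obtain \<mu> where "X *\<^sub>v col W j = \<mu> \<cdot>\<^sub>v col W j" using ev j by blast
    then show ?thesis unfolding Z_def using adj_mult_mult_eigen_col[OF W Xc i _ ] j m ij by simp
  qed
  then obtain z \<mu> where zc: "z \<in> carrier_vec n" and z0: "z \<noteq> 0\<^sub>v n" and zm: "\<forall>i<m. z $ i = 0"
    and Zz: "Z *\<^sub>v z = \<mu> \<cdot>\<^sub>v z"
    using hermitian_trailing_eigenvector[OF hermitian_adj_mult_mult[OF X Wc] m] unfolding Z_def by blast
  obtain H c where H: "unitary n H" "\<forall>j<m. col H j = unit_vec n j" "col H m = c \<cdot>\<^sub>v z"
    using householder_reflection_exists[OF zc z0 m zm] by blast
  have Hc: "H \<in> carrier_mat n n" using H(1) by (auto simp: unitary_def)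
  have colWH: "\<And>j. j < n \<Longrightarrow> col (W * H) j = W *\<^sub>v col H j"
    using Wc Hc by auto
  have WZ: "W * Z = X * W" unfolding Z_def using unitary_mult_adj_mult_mult[OF W Xc] .
  have Zc: "Z \<in> carrier_mat n n" unfolding Z_def using Wc Xc by auto
  have "X *\<^sub>v (W *\<^sub>v z) = \<mu> \<cdot>\<^sub>v (W *\<^sub>v z)"
  proof -
    have "X *\<^sub>v (W *\<^sub>v z) = (X * W) *\<^sub>v z" using Xc Wc zc by auto
    also have "\<dots> = (W * Z) *\<^sub>v z" using WZ by simp
    also have "\<dots> = W *\<^sub>v (Z *\<^sub>v z)" using Wc Zc zc by auto
    also have "\<dots> = \<mu> \<cdot>\<^sub>v (W *\<^sub>v z)" using Zz Wc zc by (simp add: mult_mat_vec)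
    finally show ?thesis .
  qed
  then have evm: "X *\<^sub>v col (W * H) m = \<mu> \<cdot>\<^sub>v col (W * H) m"
    unfolding colWH[OF m] H(3) using Xc Wc zc
    by (simp add: mult_mat_vec smult_smult_assoc mult.commute)
  have "\<exists>\<mu>. X *\<^sub>v col (W * H) j = \<mu> \<cdot>\<^sub>v col (W * H) j" if "j < Suc m" for j
  proof (cases "j < m")
    case True
    then have "col (W * H) j = col W j" using colWH[of j] H(2) m mult_unit_vec_col[OF Wc] by auto
    then show ?thesis using ev True by auto
  next
    case False
    then show ?thesis using evm that by (intro exI[of _ \<mu>]) (simp add: less_Suc_eq)
  qed
  then show ?thesis using unitary_mult[OF W H(1)] by blast
qed

lemma hermitian_eigen_cols_exist:
  assumes X: "hermitian n X"
  shows "\<exists>W. unitary n W \<and> (\<forall>j<n. \<exists>\<mu>. X *\<^sub>v col W j = \<mu> \<cdot>\<^sub>v col W j)"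
proof -
  have "m \<le> n \<Longrightarrow> \<exists>W. unitary n W \<and> (\<forall>j<m. \<exists>\<mu>. X *\<^sub>v col W j = \<mu> \<cdot>\<^sub>v col W j)" for m
  proof (induction m)
    case 0
    then show ?case using unitary_one by blast
  next
    case (Suc m)
    then obtain W where "unitary n W" "\<forall>j<m. \<exists>\<mu>. X *\<^sub>v col W j = \<mu> \<cdot>\<^sub>v col W j" by auto
    then show ?case using eigen_cols_extend[OF X] Suc.prems by auto
  qed
  then show ?thesis by blast
qed

lemma hermitian_spectral_decomp:
  assumes X: "hermitian n X"
  shows "\<exists>U d. spectral_decomp n X U d"
proof -
  have Xc: "X \<in> carrier_mat n n" using X by (auto simp: hermitian_def)
  obtain W where W: "unitary n W" and ev: "\<forall>j<n. \<exists>\<mu>. X *\<^sub>v col W j = \<mu> \<cdot>\<^sub>v col W j"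
    using hermitian_eigen_cols_exist[OF X] by auto
  have Wc: "W \<in> carrier_mat n n" using W by (auto simp: unitary_def)
  from ev obtain mu where mu: "\<And>j. j < n \<Longrightarrow> X *\<^sub>v col W j = mu j \<cdot>\<^sub>v col W j" by metis
  define Z where "Z = cadj W * X * W"
  have Zh: "hermitian n Z" unfolding Z_def using hermitian_adj_mult_mult[OF X Wc] .
  have Zi: "\<And>i j. i < n \<Longrightarrow> j < n \<Longrightarrow> Z $$ (i,j) = (if i = j then mu j else 0)"
    unfolding Z_def using adj_mult_mult_eigen_col[OF W Xc _ _ mu] by auto
  define d where "d = (\<lambda>j. Re (mu j))"
  have real: "mu j = complex_of_real (d j)" if j: "j < n" for j
  proof -
    have "mu j = cnj (mu j)" using hermitian_cnj_index[OF Zh j j] Zi[OF j j] by simp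
    then have "Im (mu j) = Im (cnj (mu j))" by (rule arg_cong)
    then have "Im (mu j) = 0" by simp
    then show ?thesis unfolding d_def by (simp add: complex_eq_iff)
  qed
  have Zc: "Z \<in> carrier_mat n n" using Zh by (simp add: hermitian_def)
  have Zd: "Z = mat_diag n (\<lambda>i. complex_of_real (d i))"
  proof (rule eq_matI)
    fix i j assume "i < dim_row (mat_diag n (\<lambda>i. complex_of_real (d i)))"
      "j < dim_col (mat_diag n (\<lambda>i. complex_of_real (d i)))"
    then have i: "i < n" and j: "j < n" by (auto simp: mat_diag_def)
    show "Z $$ (i,j) = mat_diag n (\<lambda>i. complex_of_real (d i)) $$ (i,j)"
      unfolding Zi[OF i j] using real[OF j] i j by (simp add: mat_diag_def)
  qed (use Zc in \<open>auto simp: mat_diag_def\<close>)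
  have "W * Z * cadj W = X * W * cadj W" unfolding Z_def using unitary_mult_adj_mult_mult[OF W Xc] by simp
  also have "\<dots> = X * (W * cadj W)" using Xc Wc by (intro assoc_mult_mat) auto
  also have "\<dots> = X" using unitary_right_inverse[OF W] Xc by simp
  finally show ?thesis using W Zd unfolding spectral_decomp_def by blast
qed

section \<open>An integral representation of negative powers\<close>

definition powr_resolvent_const :: "real \<Rightarrow> ennreal" where
  "powr_resolvent_const \<alpha> = (\<integral>\<^sup>+ u. ennreal (indicator {0<..} u * (u powr \<alpha> / (u + 1))) \<partial>lborel)"

lemma ennreal_powr_div_add_one_le:
  fixes \<alpha> u :: real
  shows "ennreal (indicator {0<..} u * (u powr \<alpha> / (u + 1)))
    \<le> ennreal (indicator {0..1} u * u powr \<alpha>) + ennreal (indicator {1..} u * u powr (\<alpha> - 1))"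
proof (cases "u > 0")
  case False then show ?thesis by (simp add: indicator_def)
next
  case True
  show ?thesis
  proof (cases "u \<le> 1")
    case True
    have "u powr \<alpha> / (u + 1) \<le> u powr \<alpha>" using \<open>u > 0\<close>
      by (simp add: divide_le_eq_1 field_simps)
    then have "ennreal (indicator {0<..} u * (u powr \<alpha> / (u + 1))) \<le> ennreal (indicator {0..1} u * u powr \<alpha>)"
      using True \<open>u > 0\<close> by (auto simp: indicator_def intro!: ennreal_leI)
    then show ?thesis by (meson add_increasing2 order_trans zero_le)
  next
    case False
    have "u powr \<alpha> / (u + 1) \<le> u powr \<alpha> / u" using \<open>u > 0\<close>
      by (intro divide_left_mono) auto
    also have "\<dots> = u powr (\<alpha> - 1)" using \<open>u > 0\<close> by (simp add: powr_diff)
    finally have "ennreal (indicator {0<..} u * (u powr \<alpha> / (u + 1))) \<le> ennreal (indicator {1..} u * u powr (\<alpha> - 1))"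
      using False \<open>u > 0\<close> by (auto simp: indicator_def intro!: ennreal_leI)
    then show ?thesis by (meson add_increasing order_trans zero_le)
  qed
qed

lemma powr_resolvent_const_finite:
  fixes \<alpha> :: real assumes a1: "-1 < \<alpha>" and a0: "\<alpha> < 0"
  shows "powr_resolvent_const \<alpha> < \<infinity>"
proof -
  have i1: "(\<integral>\<^sup>+ u. ennreal (indicator {0..1} u * u powr \<alpha>) \<partial>lborel) = ennreal (1 / (\<alpha> + 1))"
    using nn_integral_has_integral_lebesgue[OF _ has_integral_powr_from_0[OF a1, of 1]] by simp
  have i2: "(\<integral>\<^sup>+ u. ennreal (indicator {1..} u * u powr (\<alpha> - 1)) \<partial>lborel) = ennreal (- 1 / \<alpha>)"
    using nn_integral_has_integral_lebesgue[OF _ has_integral_powr_to_inf[of "\<alpha> - 1" 1]] a0 by simp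
  have "(\<integral>\<^sup>+ u. ennreal (indicator {0<..} u * (u powr \<alpha> / (u + 1))) \<partial>lborel)
      \<le> (\<integral>\<^sup>+ u. ennreal (indicator {0..1} u * u powr \<alpha>) + ennreal (indicator {1..} u * u powr (\<alpha> - 1)) \<partial>lborel)"
    by (intro nn_integral_mono ennreal_powr_div_add_one_le)
  also have "\<dots> = (\<integral>\<^sup>+ u. ennreal (indicator {0..1} u * u powr \<alpha>) \<partial>lborel) + (\<integral>\<^sup>+ u. ennreal (indicator {1..} u * u powr (\<alpha> - 1)) \<partial>lborel)"
    by (rule nn_integral_add) auto
  also have "\<dots> < \<infinity>" unfolding i1 i2 by simp
  finally show ?thesis unfolding powr_resolvent_const_def .
qed

lemma powr_resolvent_const_pos:
  fixes \<alpha> :: real assumes a0: "\<alpha> < 0"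
  shows "0 < powr_resolvent_const \<alpha>"
proof -
  have "(\<integral>\<^sup>+ u. ennreal (1/2) * indicator {0<..1::real} u \<partial>lborel) \<le> (\<integral>\<^sup>+ u. ennreal (indicator {0<..} u * (u powr \<alpha> / (u + 1))) \<partial>lborel)"
  proof (rule nn_integral_mono)
    fix u :: real
    show "ennreal (1/2) * indicator {0<..1} u \<le> ennreal (indicator {0<..} u * (u powr \<alpha> / (u + 1)))"
    proof (cases "0 < u \<and> u \<le> 1")
      case True
      then have "u powr 0 \<le> u powr \<alpha>" using a0
        by (intro powr_mono') auto
      then have "1 \<le> u powr \<alpha>" using True by simp
      then have "1/2 \<le> u powr \<alpha> / (u + 1)" using True by (simp add: field_simps)
      then have "ennreal (1/2) \<le> ennreal (u powr \<alpha> / (u + 1))" by (rule ennreal_leI)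
      then show ?thesis using True by (simp add: indicator_def)
    qed (auto simp: indicator_def)
  qed
  moreover have "(\<integral>\<^sup>+ u. ennreal (1/2) * indicator {0<..1::real} u \<partial>lborel) = ennreal (1/2)"
    by (simp add: nn_integral_cmult_indicator)
  moreover have "(0::ennreal) < ennreal (1/2)" by (subst ennreal_less_zero_iff) simp
  ultimately show ?thesis unfolding powr_resolvent_const_def by (metis less_le_trans)
qed

lemma nn_integral_powr_resolvent:
  fixes \<alpha> x :: real assumes x: "x > 0"
  shows "(\<integral>\<^sup>+ s. ennreal (indicator {0<..} s * (s powr \<alpha> / (s + x))) \<partial>lborel)
    = ennreal (x powr \<alpha>) * powr_resolvent_const \<alpha>"
proof -
  have scale: "ennreal (indicator {0<..} (0 + x * u) * ((0 + x * u) powr \<alpha> / ((0 + x * u) + x)))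
      = ennreal (x powr \<alpha> / x) * ennreal (indicator {0<..} u * (u powr \<alpha> / (u + 1)))" for u
  proof (cases "u > 0")
    case True
    have "(x * u) powr \<alpha> / (x * u + x) = (x powr \<alpha> / x) * (u powr \<alpha> / (u + 1))"
      using True x by (simp add: powr_mult field_simps)
    then show ?thesis using True x by (simp add: indicator_def ennreal_mult[symmetric] zero_less_mult_iff)
  next
    case False
    then have "\<not> 0 < x * u" using x by (simp add: zero_less_mult_iff)
    then show ?thesis using False by (simp add: indicator_def)
  qed
  have "(\<integral>\<^sup>+ s. ennreal (indicator {0<..} s * (s powr \<alpha> / (s + x))) \<partial>lborel)
    = ennreal \<bar>x\<bar> * (\<integral>\<^sup>+ u. ennreal (indicator {0<..} (0 + x * u) * ((0 + x * u) powr \<alpha> / ((0 + x * u) + x))) \<partial>lborel)"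
    using x by (intro nn_integral_real_affine) auto
  also have "\<dots> = ennreal x * (\<integral>\<^sup>+ u. ennreal (x powr \<alpha> / x) * ennreal (indicator {0<..} u * (u powr \<alpha> / (u + 1))) \<partial>lborel)"
    using x by (simp only: scale) simp
  also have "\<dots> = ennreal x * (ennreal (x powr \<alpha> / x) * (\<integral>\<^sup>+ u. ennreal (indicator {0<..} u * (u powr \<alpha> / (u + 1))) \<partial>lborel))"
    by (subst nn_integral_cmult) auto
  also have "\<dots> = ennreal (x powr \<alpha>) * (\<integral>\<^sup>+ u. ennreal (indicator {0<..} u * (u powr \<alpha> / (u + 1))) \<partial>lborel)"
    using x by (simp add: mult.assoc[symmetric] ennreal_mult[symmetric])
  finally show ?thesis unfolding powr_resolvent_const_def .
qed

lemma sum_powr_nn_integral_resolvent: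
  fixes \<alpha> :: real and I :: "'i set"
  assumes I: "finite I" and ux: "\<forall>i\<in>I. 0 \<le> u i \<and> 0 < x i"
  shows "ennreal (\<Sum>i\<in>I. u i * x i powr \<alpha>) * powr_resolvent_const \<alpha>
    = (\<integral>\<^sup>+ s. ennreal (indicator {0<..} s * s powr \<alpha> * (\<Sum>i\<in>I. u i / (s + x i))) \<partial>lborel)"
proof -
  let ?K = "powr_resolvent_const \<alpha>"
  have "ennreal (\<Sum>i\<in>I. u i * x i powr \<alpha>) * ?K = (\<Sum>i\<in>I. ennreal (u i * x i powr \<alpha>)) * ?K"
    using ux by (subst sum_ennreal) auto
  also have "\<dots> = (\<Sum>i\<in>I. ennreal (u i) * (ennreal (x i powr \<alpha>) * ?K))"
    using ux by (auto simp: sum_distrib_right ennreal_mult mult.assoc intro!: sum.cong)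
  also have "\<dots> = (\<Sum>i\<in>I. ennreal (u i) * (\<integral>\<^sup>+ s. ennreal (indicator {0<..} s * (s powr \<alpha> / (s + x i))) \<partial>lborel))"
  proof (intro sum.cong refl)
    fix i assume "i \<in> I"
    then have "x i > 0" using ux by auto
    show "ennreal (u i) * (ennreal (x i powr \<alpha>) * ?K) = ennreal (u i) * (\<integral>\<^sup>+ s. ennreal (indicator {0<..} s * (s powr \<alpha> / (s + x i))) \<partial>lborel)"
      by (simp only: nn_integral_powr_resolvent[OF \<open>x i > 0\<close>])
  qed
  also have "\<dots> = (\<Sum>i\<in>I. (\<integral>\<^sup>+ s. ennreal (u i) * ennreal (indicator {0<..} s * (s powr \<alpha> / (s + x i))) \<partial>lborel))"
    by (intro sum.cong refl nn_integral_cmult[symmetric]) measurable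
  also have "\<dots> = (\<integral>\<^sup>+ s. (\<Sum>i\<in>I. ennreal (u i) * ennreal (indicator {0<..} s * (s powr \<alpha> / (s + x i)))) \<partial>lborel)"
    by (intro nn_integral_sum[symmetric]) measurable
  also have "\<dots> = (\<integral>\<^sup>+ s. ennreal (indicator {0<..} s * s powr \<alpha> * (\<Sum>i\<in>I. u i / (s + x i))) \<partial>lborel)"
  proof (rule nn_integral_cong)
    fix s :: real
    have "(\<Sum>i\<in>I. ennreal (u i) * ennreal (indicator {0<..} s * (s powr \<alpha> / (s + x i))))
        = (\<Sum>i\<in>I. ennreal (u i * (indicator {0<..} s * (s powr \<alpha> / (s + x i)))))"
      using ux by (intro sum.cong refl ennreal_mult[symmetric]) (auto simp: indicator_def)
    also have "\<dots> = ennreal (\<Sum>i\<in>I. u i * (indicator {0<..} s * (s powr \<alpha> / (s + x i))))"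
      using ux by (intro sum_ennreal) (auto simp: indicator_def)
    also have "(\<Sum>i\<in>I. u i * (indicator {0<..} s * (s powr \<alpha> / (s + x i)))) =
        indicator {0<..} s * s powr \<alpha> * (\<Sum>i\<in>I. u i / (s + x i))"
      by (simp add: sum_distrib_left algebra_simps)
    finally show "(\<Sum>i\<in>I. ennreal (u i) * ennreal (indicator {0<..} s * (s powr \<alpha> / (s + x i)))) =
        ennreal (indicator {0<..} s * s powr \<alpha> * (\<Sum>i\<in>I. u i / (s + x i)))" .
  qed
  finally show ?thesis .
qed

lemma sum_powr_le_if_resolvent_le:
  fixes \<alpha> :: real and I :: "'i set" and J :: "'j set"
  assumes a1: "-1 < \<alpha>" and a0: "\<alpha> < 0" and I: "finite I" and J: "finite J"
    and ux: "\<forall>i\<in>I. 0 \<le> u i \<and> 0 < x i" and vy: "\<forall>j\<in>J. 0 \<le> v j \<and> 0 < y j"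
    and le: "\<And>s. s > 0 \<Longrightarrow> (\<Sum>i\<in>I. u i / (s + x i)) \<le> (\<Sum>j\<in>J. v j / (s + y j))"
  shows "(\<Sum>i\<in>I. u i * x i powr \<alpha>) \<le> (\<Sum>j\<in>J. v j * y j powr \<alpha>)"
proof -
  let ?K = "powr_resolvent_const \<alpha>"
  have "ennreal (\<Sum>i\<in>I. u i * x i powr \<alpha>) * ?K \<le> ennreal (\<Sum>j\<in>J. v j * y j powr \<alpha>) * ?K"
    unfolding sum_powr_nn_integral_resolvent[OF I ux] sum_powr_nn_integral_resolvent[OF J vy]
  proof (rule nn_integral_mono)
    fix s :: real
    show "ennreal (indicator {0<..} s * s powr \<alpha> * (\<Sum>i\<in>I. u i / (s + x i)))
      \<le> ennreal (indicator {0<..} s * s powr \<alpha> * (\<Sum>j\<in>J. v j / (s + y j)))"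
    proof (cases "s > 0")
      case True
      then show ?thesis using le[OF True] by (intro ennreal_leI) (auto simp: indicator_def intro: mult_left_mono)
    qed (simp add: indicator_def)
  qed
  moreover obtain k where k: "?K = ennreal k" "k > 0"
  proof -
    have f: "?K < \<infinity>" using powr_resolvent_const_finite[OF a1 a0] .
    have p: "0 < ?K" using powr_resolvent_const_pos[OF a0] .
    from f obtain k where "?K = ennreal k" "0 \<le> k" using less_top_ennreal[of ?K] by auto
    moreover have "k > 0" using p \<open>?K = ennreal k\<close> by simp
    ultimately show ?thesis using that by blast
  qed
  moreover have "0 \<le> (\<Sum>i\<in>I. u i * x i powr \<alpha>)" "0 \<le> (\<Sum>j\<in>J. v j * y j powr \<alpha>)"
    using ux vy by (auto intro!: sum_nonneg)
  ultimately have "(\<Sum>i\<in>I. u i * x i powr \<alpha>) * k \<le> (\<Sum>j\<in>J. v j * y j powr \<alpha>) * k"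
    by (simp add: ennreal_mult[symmetric])
  then show ?thesis using k(2) by simp
qed

section \<open>Spectral decompositions, real powers and the Loewner order\<close>

definition loewner_le :: "nat \<Rightarrow> complex mat \<Rightarrow> complex mat \<Rightarrow> bool" where
  "loewner_le n X Y \<longleftrightarrow> (\<forall>v\<in>carrier_vec n. Re (qform X v) \<le> Re (qform Y v))"

text \<open>\<^const>\<open>mat_powr\<close> picks one spectral decomposition of \<open>X\<close>, the same for every exponent.\<close>

lemma mat_powr_spectral:
  assumes X: "hermitian n X"
  obtains U d where "spectral_decomp n X U d" "\<And>p. spectral_decomp n (mat_powr X p) U (\<lambda>j. d j powr p)"
proof -
  have dr: "dim_row X = n" using X by (auto simp: hermitian_def)
  let ?P = "\<lambda>(U, d). spectral_decomp n X U d"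
  have ex: "\<exists>x. ?P x" using hermitian_spectral_decomp[OF X] by auto
  obtain U d where Ud: "(SOME x. ?P x) = (U, d)" by (cases "SOME x. ?P x") auto
  have "spectral_decomp n X U d" using someI_ex[OF ex] Ud by simp
  moreover have "spectral_decomp n (mat_powr X p) U (\<lambda>j. d j powr p)" for p
    using calculation unfolding mat_powr_def Let_def dr Ud by (simp add: spectral_decomp_def)
  ultimately show ?thesis using that by blast
qed

lemma spectral_decomp_hermitian:
  "spectral_decomp n X U d \<Longrightarrow> hermitian n X"
  by (auto simp: spectral_decomp_def unitary_def intro: hermitian_conj_diag)

lemma qform_spectral:
  assumes "spectral_decomp n X U d" "v \<in> carrier_vec n"
  shows "Re (qform X v) = (\<Sum>j<n. d j * (cmod (coord n U v j))\<^sup>2)"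
  using assms qform_conj_diag[of U n v] by (auto simp: spectral_decomp_def unitary_def Re_sum)

lemma mtrace_spectral:
  assumes "spectral_decomp n X U d"
  shows "Re (mtrace X) = (\<Sum>j<n. d j)"
  using assms mtrace_conj_diag by (auto simp: spectral_decomp_def Re_sum)

lemma qform_spectral_lower_bound:
  assumes D: "spectral_decomp n X U d" and d: "\<forall>j<n. \<gamma> \<le> d j" and v: "v \<in> carrier_vec n"
  shows "\<gamma> * (\<Sum>k<n. (cmod (v $ k))\<^sup>2) \<le> Re (qform X v)"
proof -
  have U: "unitary n U" using D by (simp add: spectral_decomp_def)
  have "\<gamma> * (\<Sum>k<n. (cmod (v $ k))\<^sup>2) = (\<Sum>j<n. \<gamma> * (cmod (coord n U v j))\<^sup>2)"
    unfolding coord_norm[OF U, symmetric] by (simp add: sum_distrib_left)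
  also have "\<dots> \<le> (\<Sum>j<n. d j * (cmod (coord n U v j))\<^sup>2)"
    using d by (intro sum_mono mult_right_mono) auto
  also have "\<dots> = Re (qform X v)" using qform_spectral[OF D v] ..
  finally show ?thesis .
qed

lemma min_spectral_pos:
  fixes d :: "nat \<Rightarrow> real"
  assumes "\<forall>j<n. 0 < d j"
  obtains \<gamma> where "0 < \<gamma>" "\<forall>j<n. \<gamma> \<le> d j"
proof -
  define \<gamma> where "\<gamma> = Min (insert 1 (d ` {..<n}))"
  have "0 < \<gamma>" unfolding \<gamma>_def using assms by (subst Min_gr_iff) auto
  moreover have "\<forall>j<n. \<gamma> \<le> d j" unfolding \<gamma>_def by (auto intro: Min_le)
  ultimately show ?thesis using that by blast
qed

lemma pos_def_iff_spectral_pos: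
  assumes D: "spectral_decomp n X U d"
  shows "pos_def n X \<longleftrightarrow> (\<forall>j<n. 0 < d j)"
proof
  assume P: "pos_def n X"
  have U: "unitary n U" using D by (simp add: spectral_decomp_def)
  show "\<forall>j<n. 0 < d j"
  proof (intro allI impI)
    fix j assume j: "j < n"
    have vc: "col U j \<in> carrier_vec n" using unitary_carrier[OF U] j by auto
    have "coord n U (col U j) j \<noteq> 0" using coord_col[OF U j j] by simp
    then have "col U j \<noteq> 0\<^sub>v n" unfolding coord_def by auto
    then have "0 < Re (qform X (col U j))" using P vc by (auto simp: pos_def_def)
    also have "Re (qform X (col U j)) = d j"
      using qform_spectral[OF D vc] sum_mult_coord_col_sq[OF U j] by simp
    finally show "0 < d j" .
  qed
next
  assume "\<forall>j<n. 0 < d j"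
  then obtain \<gamma> where \<gamma>: "0 < \<gamma>" "\<forall>j<n. \<gamma> \<le> d j" by (rule min_spectral_pos)
  have "0 < Re (qform X v)" if v: "v \<in> carrier_vec n" "v \<noteq> 0\<^sub>v n" for v
  proof -
    have "0 < \<gamma> * (\<Sum>k<n. (cmod (v $ k))\<^sup>2)" using \<gamma> sum_cmod_sq_pos[OF v] by simp
    also have "\<dots> \<le> Re (qform X v)" using qform_spectral_lower_bound[OF D \<gamma>(2) v(1)] .
    finally show ?thesis .
  qed
  then show "pos_def n X" using spectral_decomp_hermitian[OF D] unfolding pos_def_def by blast
qed

lemma pos_def_hermitian: "pos_def n X \<Longrightarrow> hermitian n X"
  by (simp add: pos_def_def)

lemma pos_def_mat_powr:
  assumes "pos_def n X" shows "pos_def n (mat_powr X p)"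
proof -
  obtain U d where D: "spectral_decomp n X U d" and Dp: "spectral_decomp n (mat_powr X p) U (\<lambda>j. d j powr p)"
    using mat_powr_spectral[OF pos_def_hermitian[OF assms]] by blast
  show ?thesis using assms unfolding pos_def_iff_spectral_pos[OF D] pos_def_iff_spectral_pos[OF Dp] by auto
qed

lemma mtrace_mat_powr_nonneg:
  assumes "hermitian n X" shows "0 \<le> Re (mtrace (mat_powr X p))"
proof -
  obtain U d where "spectral_decomp n X U d" and D: "spectral_decomp n (mat_powr X p) U (\<lambda>j. d j powr p)"
    using mat_powr_spectral[OF assms] by blast
  show ?thesis unfolding mtrace_spectral[OF D] by (simp add: sum_nonneg)
qed

lemma qform_add:
  assumes X: "X \<in> carrier_mat n n" and Y: "Y \<in> carrier_mat n n" and v: "v \<in> carrier_vec n"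
  shows "qform (X + Y) v = qform X v + qform Y v"
  unfolding qform_def using X Y v
  by (simp add: add_mult_distrib_mat_vec distrib_right sum.distrib)

lemma qform_diff:
  assumes X: "X \<in> carrier_mat n n" and Y: "Y \<in> carrier_mat n n" and v: "v \<in> carrier_vec n"
  shows "qform (X - Y) v = qform X v - qform Y v"
  unfolding qform_def using X Y v
  by (simp add: minus_mult_distrib_mat_vec left_diff_distrib sum_subtractf)

lemma qform_smult_one:
  assumes v: "v \<in> carrier_vec n"
  shows "Re (qform (complex_of_real c \<cdot>\<^sub>m 1\<^sub>m n) v) = c * (\<Sum>k<n. (cmod (v $ k))\<^sup>2)"
proof -
  have "qform (complex_of_real c \<cdot>\<^sub>m 1\<^sub>m n) v = (\<Sum>k<n. complex_of_real c * (cnj (v $ k) * v $ k))"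
    unfolding qform_def using v by (intro sum.cong) auto
  then show ?thesis by (simp add: cnj_mult_self sum_distrib_left Re_sum del: of_real_power)
qed

lemma pos_def_qform_nonneg:
  assumes "pos_def n X" "v \<in> carrier_vec n"
  shows "0 \<le> Re (qform X v)"
proof (cases "v = 0\<^sub>v n")
  case True then show ?thesis by (simp add: qform_def)
next
  case False then show ?thesis using assms by (auto simp: pos_def_def less_imp_le)
qed

lemma pos_def_pos_semidef: "pos_def n X \<Longrightarrow> pos_semidef n X"
  using pos_def_qform_nonneg by (auto simp: pos_semidef_def pos_def_def)

lemma loewner_le_add_pos_def:
  assumes "pos_def n A" "pos_def n B"
  shows "loewner_le n A (A + B)"
  using assms qform_add pos_def_qform_nonneg[OF assms(2)]
  unfolding loewner_le_def pos_def_def hermitian_def by auto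

lemma pos_def_if_loewner_ge:
  assumes "pos_def n A" "hermitian n C" "loewner_le n A C"
  shows "pos_def n C"
  using assms unfolding pos_def_def loewner_le_def by (meson less_le_trans)

lemma pos_def_ge_smult_one:
  assumes "pos_def n X"
  obtains \<gamma> where "0 < \<gamma>" "loewner_le n (complex_of_real \<gamma> \<cdot>\<^sub>m 1\<^sub>m n) X"
proof -
  obtain U d where D: "spectral_decomp n X U d"
    using assms hermitian_spectral_decomp unfolding pos_def_def by blast
  have "\<forall>j<n. 0 < d j" using assms pos_def_iff_spectral_pos[OF D] by simp
  then obtain \<gamma> where "0 < \<gamma>" "\<forall>j<n. \<gamma> \<le> d j" by (rule min_spectral_pos)
  then show ?thesis
    using that qform_spectral_lower_bound[OF D] qform_smult_one unfolding loewner_le_def by auto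
qed

lemma linear_map_mat_diff:
  assumes L: "linear_map_mat k n \<Phi>" and X: "X \<in> carrier_mat k k" and Y: "Y \<in> carrier_mat k k"
  shows "\<Phi> (X - Y) = \<Phi> X - \<Phi> Y"
proof -
  have "X - Y = X + (-1) \<cdot>\<^sub>m Y" using X Y by (intro eq_matI) auto
  then have "\<Phi> (X - Y) = \<Phi> X + (-1) \<cdot>\<^sub>m \<Phi> Y" using L X Y unfolding linear_map_mat_def by auto
  also have "\<dots> = \<Phi> X - \<Phi> Y"
    using L X Y unfolding linear_map_mat_def by (intro eq_matI) auto
  finally show ?thesis .
qed

lemma positive_map_loewner_mono:
  assumes L: "linear_map_mat k n \<Phi>" and P: "positive_map k n \<Phi>"
    and X: "hermitian k X" and Y: "hermitian k Y" and le: "loewner_le k X Y"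
  shows "loewner_le n (\<Phi> X) (\<Phi> Y)"
proof -
  have Xc: "X \<in> carrier_mat k k" and Yc: "Y \<in> carrier_mat k k" using X Y by (auto simp: hermitian_def)
  have "pos_semidef k (Y - X)"
    unfolding pos_semidef_def using hermitian_diff[OF Y X] le qform_diff[OF Yc Xc]
    by (auto simp: loewner_le_def)
  then have "pos_semidef n (\<Phi> Y - \<Phi> X)"
    using P linear_map_mat_diff[OF L Yc Xc] by (auto simp: positive_map_def)
  moreover have "\<Phi> X \<in> carrier_mat n n" "\<Phi> Y \<in> carrier_mat n n"
    using L Xc Yc by (auto simp: linear_map_mat_def)
  ultimately show ?thesis using qform_diff unfolding loewner_le_def pos_semidef_def by fastforce
qed

lemma positive_unital_map_pos_def:
  assumes L: "linear_map_mat k n \<Phi>" and P: "positive_map k n \<Phi>" and Un: "unital_map k n \<Phi>"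
    and X: "pos_def k X"
  shows "pos_def n (\<Phi> X)"
proof -
  obtain \<gamma> where \<gamma>: "0 < \<gamma>" and le: "loewner_le k (complex_of_real \<gamma> \<cdot>\<^sub>m 1\<^sub>m k) X"
    using pos_def_ge_smult_one[OF X] .
  have Xh: "hermitian k X" using X by (simp add: pos_def_def)
  have "\<Phi> (complex_of_real \<gamma> \<cdot>\<^sub>m 1\<^sub>m k) = complex_of_real \<gamma> \<cdot>\<^sub>m 1\<^sub>m n"
    using L Un unfolding linear_map_mat_def unital_map_def by auto
  then have "loewner_le n (complex_of_real \<gamma> \<cdot>\<^sub>m 1\<^sub>m n) (\<Phi> X)"
    using positive_map_loewner_mono[OF L P hermitian_smult_one Xh le] by simp
  moreover have "hermitian n (\<Phi> X)"
    using P pos_def_pos_semidef[OF X] by (simp add: positive_map_def pos_semidef_def)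
  moreover have "0 < Re (qform (\<Phi> X) v)" if v: "v \<in> carrier_vec n" "v \<noteq> 0\<^sub>v n" for v
  proof -
    have "0 < \<gamma> * (\<Sum>k<n. (cmod (v $ k))\<^sup>2)" using \<gamma> sum_cmod_sq_pos[OF v] by simp
    also have "\<dots> \<le> Re (qform (\<Phi> X) v)"
      using \<open>loewner_le n _ (\<Phi> X)\<close> v qform_smult_one unfolding loewner_le_def by auto
    finally show ?thesis .
  qed
  ultimately show ?thesis unfolding pos_def_def by blast
qed

section \<open>The Loewner-Heinz inequality\<close>

definition resolvent_functional :: "nat \<Rightarrow> complex mat \<Rightarrow> real \<Rightarrow> complex vec \<Rightarrow> complex vec \<Rightarrow> real" where
  "resolvent_functional n A s v x =
     2 * Re (\<Sum>i<n. x $ i * cnj (v $ i)) - s * (\<Sum>i<n. (cmod (x $ i))\<^sup>2) - Re (qform A x)"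

lemma two_Re_mult_cnj_le:
  assumes e: "e > 0"
  shows "2 * Re (\<xi> * cnj \<gamma>) - e * (cmod \<xi>)\<^sup>2 \<le> (cmod \<gamma>)\<^sup>2 / e"
proof -
  have "0 \<le> (e * Re \<xi> - Re \<gamma>)\<^sup>2 + (e * Im \<xi> - Im \<gamma>)\<^sup>2" by simp
  then have "e * (2 * (Re \<xi> * Re \<gamma> + Im \<xi> * Im \<gamma>) - e * ((Re \<xi>)\<^sup>2 + (Im \<xi>)\<^sup>2)) \<le> (Re \<gamma>)\<^sup>2 + (Im \<gamma>)\<^sup>2"
    by (simp add: power2_eq_square algebra_simps)
  then show ?thesis using e by (simp add: cmod_power2 field_simps)
qed

lemma resolvent_functional_coord:
  assumes D: "spectral_decomp n A U a" and v: "v \<in> carrier_vec n" and x: "x \<in> carrier_vec n"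
  shows "resolvent_functional n A s v x
    = (\<Sum>j<n. 2 * Re (coord n U x j * cnj (coord n U v j)) - (s + a j) * (cmod (coord n U x j))\<^sup>2)"
proof -
  have U: "unitary n U" using D by (simp add: spectral_decomp_def)
  show ?thesis
    unfolding resolvent_functional_def coord_inner[OF U, symmetric] coord_norm[OF U, symmetric] qform_spectral[OF D x]
    by (simp add: Re_sum sum_distrib_left sum_subtractf algebra_simps)
qed

lemma resolvent_functional_le:
  assumes D: "spectral_decomp n A U a" and pos: "\<forall>j<n. s + a j > 0"
    and v: "v \<in> carrier_vec n" and x: "x \<in> carrier_vec n"
  shows "resolvent_functional n A s v x \<le> (\<Sum>j<n. (cmod (coord n U v j))\<^sup>2 / (s + a j))"
  unfolding resolvent_functional_coord[OF D v x] using pos by (intro sum_mono two_Re_mult_cnj_le) auto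

text \<open>The maximiser is \<open>x = (s + A)\<^sup>-\<^sup>1 v\<close>.\<close>

lemma resolvent_functional_attains:
  assumes D: "spectral_decomp n A U a" and pos: "\<forall>j<n. s + a j > 0" and v: "v \<in> carrier_vec n"
  shows "\<exists>x\<in>carrier_vec n. resolvent_functional n A s v x = (\<Sum>j<n. (cmod (coord n U v j))\<^sup>2 / (s + a j))"
proof -
  have U: "unitary n U" using D by (simp add: spectral_decomp_def)
  define y where "y = vec n (\<lambda>j. coord n U v j / complex_of_real (s + a j))"
  define x where "x = U *\<^sub>v y"
  have yc: "y \<in> carrier_vec n" unfolding y_def by simp
  have xc: "x \<in> carrier_vec n" unfolding x_def using unitary_carrier[OF U] yc by simp
  have cx: "\<And>j. j < n \<Longrightarrow> coord n U x j = coord n U v j / complex_of_real (s + a j)"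
    unfolding x_def using coord_mult_vec[OF U yc] unfolding y_def by simp
  have "resolvent_functional n A s v x = (\<Sum>j<n. (cmod (coord n U v j))\<^sup>2 / (s + a j))"
    unfolding resolvent_functional_coord[OF D v xc]
  proof (intro sum.cong refl)
    fix j assume "j \<in> {..<n}"
    then have j: "j < n" and e: "s + a j > 0" using pos by auto
    let ?g = "coord n U v j" and ?e = "s + a j"
    have h1: "Re (coord n U x j * cnj ?g) = (cmod ?g)\<^sup>2 / ?e"
      unfolding cx[OF j] times_divide_eq_left complex_norm_square[symmetric]
      by (simp only: Re_divide_of_real Re_complex_of_real)
    have h2: "(cmod (coord n U x j))\<^sup>2 = (cmod ?g)\<^sup>2 / ?e\<^sup>2"
      unfolding cx[OF j] using e by (simp add: norm_divide power_divide del: of_real_add)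
    have "2 * (G / E) - E * (G / E\<^sup>2) = G / E" if "E \<noteq> 0" for G E :: real
      using that by (simp add: power2_eq_square field_simps)
    then show "2 * Re (coord n U x j * cnj ?g) - ?e * (cmod (coord n U x j))\<^sup>2 = (cmod ?g)\<^sup>2 / ?e"
      unfolding h1 h2 using e by simp
  qed
  then show ?thesis using xc by blast
qed

lemma resolvent_form_antimono:
  assumes DA: "spectral_decomp n A UA a" and DC: "spectral_decomp n C UC c"
    and pa: "\<forall>j<n. s + a j > 0" and pc: "\<forall>j<n. s + c j > 0"
    and le: "loewner_le n A C" and v: "v \<in> carrier_vec n"
  shows "(\<Sum>j<n. (cmod (coord n UC v j))\<^sup>2 / (s + c j)) \<le> (\<Sum>j<n. (cmod (coord n UA v j))\<^sup>2 / (s + a j))"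
proof -
  obtain x where x: "x \<in> carrier_vec n"
    and eq: "resolvent_functional n C s v x = (\<Sum>j<n. (cmod (coord n UC v j))\<^sup>2 / (s + c j))"
    using resolvent_functional_attains[OF DC pc v] by blast
  have "resolvent_functional n C s v x \<le> resolvent_functional n A s v x"
    using le x unfolding loewner_le_def resolvent_functional_def by auto
  also have "\<dots> \<le> (\<Sum>j<n. (cmod (coord n UA v j))\<^sup>2 / (s + a j))"
    using resolvent_functional_le[OF DA pa v x] .
  finally show ?thesis using eq by simp
qed

lemma resolvent_form_mult_mono:
  assumes DA: "spectral_decomp n A UA a" and DC: "spectral_decomp n C UC c"
    and pa: "\<forall>j<n. 0 < a j" and pc: "\<forall>j<n. 0 < c j"
    and le: "loewner_le n A C" and v: "v \<in> carrier_vec n" and s: "0 < s"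
  shows "(\<Sum>j<n. (cmod (coord n UA v j))\<^sup>2 * a j / (s + a j))
    \<le> (\<Sum>j<n. (cmod (coord n UC v j))\<^sup>2 * c j / (s + c j))"
proof -
  let ?wA = "\<lambda>j. (cmod (coord n UA v j))\<^sup>2" and ?wC = "\<lambda>j. (cmod (coord n UC v j))\<^sup>2"
  have pa': "\<forall>j<n. s + a j > 0" and pc': "\<forall>j<n. s + c j > 0" using pa pc s by (auto simp: add_pos_pos)
  have split: "w * x / (s + x) = w - s * (w / (s + x))" if "s + x > 0" for w x :: real
    using that by (simp add: field_simps)
  have "(\<Sum>j<n. ?wA j * a j / (s + a j)) = (\<Sum>j<n. ?wA j) - s * (\<Sum>j<n. ?wA j / (s + a j))"
    using pa' by (simp add: split sum_subtractf sum_distrib_left)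
  also have "\<dots> \<le> (\<Sum>j<n. ?wC j) - s * (\<Sum>j<n. ?wC j / (s + c j))"
    using resolvent_form_antimono[OF DA DC pa' pc' le v] s
      coord_norm[of n UA v] coord_norm[of n UC v] DA DC
    by (simp add: mult_left_mono spectral_decomp_def)
  also have "\<dots> = (\<Sum>j<n. ?wC j * c j / (s + c j))"
    using pc' by (simp add: split sum_subtractf sum_distrib_left)
  finally show ?thesis .
qed

lemma sum_mult_powr_minus_one:
  fixes w x :: "nat \<Rightarrow> real"
  assumes "\<forall>j<n. 0 < x j"
  shows "(\<Sum>j<n. (w j * x j) * x j powr (p - 1)) = (\<Sum>j<n. x j powr p * w j)"
proof (intro sum.cong refl)
  fix j assume "j \<in> {..<n}"
  then have "x j > 0" using assms by simp
  then have "x j * x j powr (p - 1) = x j powr p" by (simp add: powr_diff)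
  moreover have "(w j * x j) * x j powr (p - 1) = (x j * x j powr (p - 1)) * w j" by (simp only: ac_simps)
  ultimately show "(w j * x j) * x j powr (p - 1) = x j powr p * w j" by simp
qed

lemma mat_powr_mono:
  assumes A: "pos_def n A" and C: "pos_def n C" and le: "loewner_le n A C"
    and p0: "0 < p" and p1: "p \<le> 1"
  shows "loewner_le n (mat_powr A p) (mat_powr C p)"
  unfolding loewner_le_def
proof
  fix v :: "complex vec" assume v: "v \<in> carrier_vec n"
  obtain UA a where DA: "spectral_decomp n A UA a" and DAp: "spectral_decomp n (mat_powr A p) UA (\<lambda>j. a j powr p)"
    using mat_powr_spectral[OF pos_def_hermitian[OF A]] by blast
  obtain UC c where DC: "spectral_decomp n C UC c" and DCp: "spectral_decomp n (mat_powr C p) UC (\<lambda>j. c j powr p)"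
    using mat_powr_spectral[OF pos_def_hermitian[OF C]] by blast
  have pa: "\<forall>j<n. 0 < a j" and pc: "\<forall>j<n. 0 < c j"
    using A C pos_def_iff_spectral_pos[OF DA] pos_def_iff_spectral_pos[OF DC] by auto
  let ?wA = "\<lambda>j. (cmod (coord n UA v j))\<^sup>2" and ?wC = "\<lambda>j. (cmod (coord n UC v j))\<^sup>2"
  have "(\<Sum>j<n. a j powr p * ?wA j) \<le> (\<Sum>j<n. c j powr p * ?wC j)"
  proof (cases "p = 1")
    case True
    have "(\<Sum>j<n. a j powr p * ?wA j) = Re (qform A v)"
      unfolding qform_spectral[OF DA v] True using pa by (intro sum.cong) auto
    moreover have "(\<Sum>j<n. c j powr p * ?wC j) = Re (qform C v)"
      unfolding qform_spectral[OF DC v] True using pc by (intro sum.cong) auto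
    ultimately show ?thesis using le v by (simp add: loewner_le_def)
  next
    case False
    have "(\<Sum>j<n. (?wA j * a j) * a j powr (p - 1)) \<le> (\<Sum>j<n. (?wC j * c j) * c j powr (p - 1))"
      using p0 p1 False pa pc resolvent_form_mult_mono[OF DA DC pa pc le v]
      by (intro sum_powr_le_if_resolvent_le) auto
    then show ?thesis unfolding sum_mult_powr_minus_one[OF pa] sum_mult_powr_minus_one[OF pc] .
  qed
  then show "Re (qform (mat_powr A p) v) \<le> Re (qform (mat_powr C p) v)"
    using qform_spectral[OF DAp v] qform_spectral[OF DCp v] by simp
qed

lemma mat_powr_antimono:
  assumes A: "pos_def n A" and C: "pos_def n C" and le: "loewner_le n A C"
    and p0: "p < 0" and p1: "-1 \<le> p"
  shows "loewner_le n (mat_powr C p) (mat_powr A p)"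
  unfolding loewner_le_def
proof
  fix v :: "complex vec" assume v: "v \<in> carrier_vec n"
  obtain UA a where DA: "spectral_decomp n A UA a" and DAp: "spectral_decomp n (mat_powr A p) UA (\<lambda>j. a j powr p)"
    using mat_powr_spectral[OF pos_def_hermitian[OF A]] by blast
  obtain UC c where DC: "spectral_decomp n C UC c" and DCp: "spectral_decomp n (mat_powr C p) UC (\<lambda>j. c j powr p)"
    using mat_powr_spectral[OF pos_def_hermitian[OF C]] by blast
  have pa: "\<forall>j<n. 0 < a j" and pc: "\<forall>j<n. 0 < c j"
    using A C pos_def_iff_spectral_pos[OF DA] pos_def_iff_spectral_pos[OF DC] by auto
  let ?wA = "\<lambda>j. (cmod (coord n UA v j))\<^sup>2" and ?wC = "\<lambda>j. (cmod (coord n UC v j))\<^sup>2"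
  have resolvent: "(\<Sum>j<n. ?wC j / (s + c j)) \<le> (\<Sum>j<n. ?wA j / (s + a j))" if "s \<ge> 0" for s
    using resolvent_form_antimono[OF DA DC _ _ le v] pa pc that by (simp add: add_nonneg_pos)
  have "(\<Sum>j<n. ?wC j * c j powr p) \<le> (\<Sum>j<n. ?wA j * a j powr p)"
  proof (cases "p = -1")
    case True
    have "(\<Sum>j<n. ?wC j * c j powr p) = (\<Sum>j<n. ?wC j / (0 + c j))"
      unfolding True using pc by (intro sum.cong) (auto simp: powr_minus_divide)
    moreover have "(\<Sum>j<n. ?wA j * a j powr p) = (\<Sum>j<n. ?wA j / (0 + a j))"
      unfolding True using pa by (intro sum.cong) (auto simp: powr_minus_divide)
    ultimately show ?thesis using resolvent[of 0] by simp
  next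
    case False
    then show ?thesis using p0 p1 pa pc resolvent by (intro sum_powr_le_if_resolvent_le) auto
  qed
  then show "Re (qform (mat_powr C p) v) \<le> Re (qform (mat_powr A p) v)"
    using qform_spectral[OF DAp v] qform_spectral[OF DCp v] by (simp add: mult.commute)
qed

section \<open>Trace inequalities\<close>

lemma sum_convex_eigenvalues_le:
  assumes DY: "spectral_decomp n Y V mu" and DX: "spectral_decomp n X U la"
    and pla: "\<forall>j<n. 0 < la j" and cvx: "convex_on {0<..} f"
    and le: "\<forall>v\<in>carrier_vec n. f (Re (qform Y v)) \<le> f (Re (qform X v))"
  shows "(\<Sum>i<n. f (mu i)) \<le> (\<Sum>j<n. f (la j))"
proof -
  have V: "unitary n V" and U: "unitary n U" using DY DX by (auto simp: spectral_decomp_def)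
  have Vc: "V \<in> carrier_mat n n" and Uc: "U \<in> carrier_mat n n" using U V by (auto simp: unitary_def)
  define P where "P = (\<lambda>i j. (cmod (coord n U (col V i) j))\<^sup>2)"
  have colc: "\<And>i. i < n \<Longrightarrow> col V i \<in> carrier_vec n" using Vc by auto
  have mu: "mu i = Re (qform Y (col V i))" if "i < n" for i
    using qform_spectral[OF DY colc[OF that]] sum_mult_coord_col_sq[OF V that] by simp
  have qX: "Re (qform X (col V i)) = (\<Sum>j<n. P i j * la j)" if "i < n" for i
    unfolding P_def using qform_spectral[OF DX colc[OF that]] by (simp add: mult.commute)
  have row: "(\<Sum>j<n. P i j) = 1" if i: "i < n" for i
    unfolding P_def coord_norm[OF U] using Vc i unitary_col_norm[OF V i] by simp
  have col: "(\<Sum>i<n. P i j) = 1" if j: "j < n" for j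
  proof -
    have "(\<Sum>i<n. P i j) = (\<Sum>i<n. (cmod (coord n V (col U j) i))\<^sup>2)"
      unfolding P_def using coord_col_swap[OF Uc Vc _ j] by (intro sum.cong) auto
    then show ?thesis unfolding coord_norm[OF V] using Uc j unitary_col_norm[OF U j] by simp
  qed
  have "(\<Sum>i<n. f (mu i)) \<le> (\<Sum>i<n. f (Re (qform X (col V i))))"
    using le colc mu by (intro sum_mono) auto
  also have "\<dots> = (\<Sum>i<n. f (\<Sum>j<n. P i j * la j))" using qX by simp
  also have "\<dots> \<le> (\<Sum>i<n. \<Sum>j<n. P i j * f (la j))"
  proof (intro sum_mono)
    fix i assume "i \<in> {..<n}"
    then show "f (\<Sum>j<n. P i j * la j) \<le> (\<Sum>j<n. P i j * f (la j))"
      using row pla convex_on_sum[OF _ _ cvx, of "{..<n}" "P i" la] by (auto simp: P_def)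
  qed
  also have "\<dots> = (\<Sum>j<n. (\<Sum>i<n. P i j) * f (la j))"
    by (subst sum.swap) (simp add: sum_distrib_right)
  also have "\<dots> = (\<Sum>j<n. f (la j))" using col by simp
  finally show ?thesis .
qed

lemma convex_on_powr_nonpos:
  assumes "q \<le> 0"
  shows "convex_on {0<..} (\<lambda>x::real. x powr q)"
proof (rule convex_on_realI[where f' = "\<lambda>x. q * x powr (q - 1)"])
  fix x :: real assume "x \<in> {0<..}"
  then show "((\<lambda>x. x powr q) has_real_derivative q * x powr (q - 1)) (at x)"
    by (intro has_real_derivative_powr) auto
next
  fix x y :: real assume "x \<in> {0<..}" "y \<in> {0<..}" "x \<le> y"
  then show "q * x powr (q - 1) \<le> q * y powr (q - 1)"
    using assms by (intro mult_left_mono_neg powr_mono2') auto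
qed simp

lemma mtrace_powr_antimono:
  assumes X: "pos_def n X" and Y: "pos_def n Y" and le: "loewner_le n X Y" and q: "q \<le> 0"
  shows "Re (mtrace (mat_powr Y q)) \<le> Re (mtrace (mat_powr X q))"
proof -
  obtain U la where DX: "spectral_decomp n X U la" and DXq: "spectral_decomp n (mat_powr X q) U (\<lambda>j. la j powr q)"
    using mat_powr_spectral[OF pos_def_hermitian[OF X]] by blast
  obtain V mu where DY: "spectral_decomp n Y V mu" and DYq: "spectral_decomp n (mat_powr Y q) V (\<lambda>j. mu j powr q)"
    using mat_powr_spectral[OF pos_def_hermitian[OF Y]] by blast
  have "(Re (qform Y v)) powr q \<le> (Re (qform X v)) powr q" if v: "v \<in> carrier_vec n" for v
  proof (cases "v = 0\<^sub>v n")
    case False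
    then have "0 < Re (qform X v)" using X v by (auto simp: pos_def_def)
    then show ?thesis using le v q unfolding loewner_le_def by (intro powr_mono2') auto
  qed (simp add: qform_def)
  then show ?thesis
    unfolding mtrace_spectral[OF DXq] mtrace_spectral[OF DYq]
    using sum_convex_eigenvalues_le[OF DY DX _ convex_on_powr_nonpos[OF q]] X pos_def_iff_spectral_pos[OF DX]
    by blast
qed

lemma mtrace_powr_mono:
  assumes X: "pos_def n X" and Y: "pos_def n Y" and le: "loewner_le n X Y" and q: "1 \<le> q"
  shows "Re (mtrace (mat_powr X q)) \<le> Re (mtrace (mat_powr Y q))"
proof -
  obtain U la where DX: "spectral_decomp n X U la" and DXq: "spectral_decomp n (mat_powr X q) U (\<lambda>j. la j powr q)"
    using mat_powr_spectral[OF pos_def_hermitian[OF X]] by blast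
  obtain V mu where DY: "spectral_decomp n Y V mu" and DYq: "spectral_decomp n (mat_powr Y q) V (\<lambda>j. mu j powr q)"
    using mat_powr_spectral[OF pos_def_hermitian[OF Y]] by blast
  have "\<forall>v\<in>carrier_vec n. (Re (qform X v)) powr q \<le> (Re (qform Y v)) powr q"
    using le pos_def_qform_nonneg[OF X] q unfolding loewner_le_def by (auto intro: powr_mono2)
  then show ?thesis
    unfolding mtrace_spectral[OF DXq] mtrace_spectral[OF DYq]
    using sum_convex_eigenvalues_le[OF DX DY _ powr_convex[OF q]] Y pos_def_iff_spectral_pos[OF DY]
    by blast
qed

theorem corollary4p1:
  fixes k n :: nat and A B :: "complex mat" and \<Phi> :: "complex mat \<Rightarrow> complex mat" and p :: real
  assumes "pos_def k A" and "pos_def k B"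
    and "linear_map_mat k n \<Phi>" and "positive_map k n \<Phi>" and "unital_map k n \<Phi>"
    and "-1 \<le> p" and "p \<le> 1" and "p \<noteq> 0"
  shows "Re (mtrace (mat_powr (\<Phi> (mat_powr (A + B) p)) (-1/p)))
      \<le> Re (mtrace (mat_powr (\<Phi> (mat_powr A p)) (-1/p)))
       + Re (mtrace (mat_powr (\<Phi> (mat_powr B p)) (-1/p)))"
proof -
  note A = assms(1) and B = assms(2) and L = assms(3) and P = assms(4) and U = assms(5)
  have AC: "loewner_le k A (A + B)" using loewner_le_add_pos_def[OF A B] .
  have C: "pos_def k (A + B)"
    using pos_def_if_loewner_ge[OF A hermitian_add[OF pos_def_hermitian[OF A] pos_def_hermitian[OF B]] AC] .
  have img_pos_def: "pos_def n (\<Phi> (mat_powr X p))" if "pos_def k X" for X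
    using positive_unital_map_pos_def[OF L P U pos_def_mat_powr[OF that]] .
  have hermitian_powr: "hermitian k (mat_powr X p)" if "pos_def k X" for X
    using pos_def_hermitian[OF pos_def_mat_powr[OF that]] .
  have "Re (mtrace (mat_powr (\<Phi> (mat_powr (A + B) p)) (-1/p)))
      \<le> Re (mtrace (mat_powr (\<Phi> (mat_powr A p)) (-1/p)))"
  proof (cases "p > 0")
    case True
    then have "loewner_le n (\<Phi> (mat_powr A p)) (\<Phi> (mat_powr (A + B) p))"
      using positive_map_loewner_mono[OF L P] mat_powr_mono[OF A C AC] assms(7) hermitian_powr A C by blast
    moreover have "-1/p \<le> 0" using True by simp
    ultimately show ?thesis using mtrace_powr_antimono[OF img_pos_def[OF A] img_pos_def[OF C]] by blast
  next
    case False
    then have "p < 0" "1 \<le> -1/p" using assms(6,8) by (auto simp: field_simps)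
    then have "loewner_le n (\<Phi> (mat_powr (A + B) p)) (\<Phi> (mat_powr A p))"
      using positive_map_loewner_mono[OF L P] mat_powr_antimono[OF A C AC] assms(6) hermitian_powr A C by blast
    then show ?thesis using mtrace_powr_mono[OF img_pos_def[OF C] img_pos_def[OF A]] \<open>1 \<le> -1/p\<close> by blast
  qed
  then show ?thesis using mtrace_mat_powr_nonneg[OF pos_def_hermitian[OF img_pos_def[OF B]], of "-1/p"] by linarith
qed

end
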